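(* Assume $d\in\{1,2\}$. Let $W_0=(0,\dot w_0)$ with $\dot w_0\in L^2(\mathbb{T}^d)$ nonzero and $\dot w_0\ge0$ a.e. on $\mathbb{T}^d$. Let $(w(t),\partial_tw(t))=e^{t\tilde A}W_0$ for $t\in\mathbb{R}$, where $\tilde A=\begin{pmatrix}0&1\\ \Delta&0\end{pmatrix}$. Then for every $t>r(W_0)$, $w(t,\cdot)>0$ a.e. on $\mathbb{T}^d$.
   Context: $\mathbb{T}^d=\mathbb{R}^d/2\pi\mathbb{Z}^d$, real-valued functions. $e^{t\tilde A}$ is the group on $H^1\times L^2(\mathbb{T}^d)$ solving the wave equation $\partial_t^2w=\Delta w$: for $(w_0,\dot w_0)\in H^1\times L^2$, $e^{t\tilde A}(w_0,\dot w_0)=(w(t),\partial_tw(t))$ with $w\in C^0(\mathbb{R},H^1)\cap C^1(\mathbb{R},L^2)$ (equivalently given by Fourier series: $c_n(w(t))=c_n(w_0)\cos(|n|t)+c_n(\dot w_0)\frac{\sin(|n|t)}{|n|}$, with $\frac{\sin(0\cdot t)}{0}:=t$). For $f\in L^2(\mathbb{T}^d,\mathbb{R}^n)$, $r(f)=\sup\{\tilde r\ge0: f=0\text{ a.e. on some ball of }\mathbb{T}^d\text{ of radius }\tilde r\}$; here $r(W_0)=r(\dot w_0)$. *)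

theory Defs
  imports "HOL-Analysis.Analysis"
begin

text \<open>Functions on the torus T^d = R^d / 2 pi Z^d are represented as 2pi-periodic
  functions on R^d = real^'n, where d = CARD('n).\<close>

definition int_vec :: "real^'n \<Rightarrow> bool" where
  "int_vec k \<longleftrightarrow> (\<forall>i. k $ i \<in> \<int>)"

definition periodic_2pi :: "(real^'n \<Rightarrow> real) \<Rightarrow> bool" where
  "periodic_2pi f \<longleftrightarrow> (\<forall>x k. int_vec k \<longrightarrow> f (x + (2*pi) *\<^sub>R k) = f x)"

definition torus_cube :: "(real^'n) set" where
  "torus_cube = cbox 0 (\<chi> i. 2*pi)"

definition L2_torus :: "(real^'n \<Rightarrow> real) \<Rightarrow> bool" where
  "L2_torus f \<longleftrightarrow> periodic_2pi f \<and> f \<in> borel_measurable lebesgue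
      \<and> set_integrable lebesgue torus_cube (\<lambda>x. (f x)\<^sup>2)"

definition fourier_coeff :: "(real^'n \<Rightarrow> real) \<Rightarrow> real^'n \<Rightarrow> complex" where
  "fourier_coeff f n =
     (LINT x : torus_cube | lebesgue. complex_of_real (f x) * cis (- (n \<bullet> x)))
       / (2 * pi) ^ CARD('n)"

definition sin_quot :: "real^'n \<Rightarrow> real \<Rightarrow> real" where
  "sin_quot n t = (if norm n = 0 then t else sin (norm n * t) / norm n)"

text \<open>g is (a representative of) the first component w(t) of e^{t A} (w0, w1).\<close>
definition wave_position :: "(real^'n \<Rightarrow> real) \<Rightarrow> (real^'n \<Rightarrow> real) \<Rightarrow> real
     \<Rightarrow> (real^'n \<Rightarrow> real) \<Rightarrow> bool" where
  "wave_position w0 w1 t g \<longleftrightarrow> L2_torus g \<and>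
     (\<forall>n. int_vec n \<longrightarrow>
        fourier_coeff g n = fourier_coeff w0 n * complex_of_real (cos (norm n * t))
                          + fourier_coeff w1 n * complex_of_real (sin_quot n t))"

definition torus_ball :: "real^'n \<Rightarrow> real \<Rightarrow> (real^'n) set" where
  "torus_ball c r = {x. \<exists>k. int_vec k \<and> dist x (c + (2*pi) *\<^sub>R k) < r}"

definition vanish_radius :: "(real^'n \<Rightarrow> real) \<Rightarrow> real" where
  "vanish_radius f = Sup {r. r \<ge> 0 \<and>
      (\<exists>c. AE x in lebesgue. x \<in> torus_ball c r \<longrightarrow> f x = 0)}"

end

theory Submission
  imports Defs
begin

text \<open>
  For \<open>d \<in> {1, 2}\<close> the solution with data \<open>(0, w\<^sub>1)\<close> is \<open>w(t) = E\<^sub>t * w\<^sub>1\<close>, where the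
  fundamental solution \<open>E\<^sub>t\<close> is \<open>1/2\<close> on \<open>|y| < t\<close> for \<open>d = 1\<close> and
  \<open>1 / (2\<pi> sqrt (t\<^sup>2 - |y|\<^sup>2))\<close> on \<open>|y| < t\<close> for \<open>d = 2\<close>, and zero elsewhere: both are
  nonnegative, positive on the open ball of radius \<open>t\<close>, and have Fourier transform
  \<open>sin (|\<xi>| t) / |\<xi>|\<close>.  On the torus the identity is used in weak form,
  \<open>\<integral> w(t) \<phi> = \<integral> w\<^sub>1 (E\<^sub>t \<star> \<phi>)\<close> over one period, where \<open>\<star>\<close> is the correlation (the adjoint
  of convolution): it holds for trigonometric polynomials by comparing Fourier coefficients, for
  continuous periodic \<open>\<phi>\<close> by Stone--Weierstrass, and for indicators of closed periodic sets by
  dominated convergence.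
  If \<open>w(t) \<le> 0\<close> on a non-negligible set, it is so on a closed periodic set \<open>P\<close> that is
  non-negligible near some point \<open>c\<close>.  Then \<open>E\<^sub>t \<star> 1\<^sub>P > 0\<close> on the torus ball of radius \<open>t\<close>
  around \<open>c\<close>, where \<open>w\<^sub>1 \<ge> 0\<close> does not vanish because \<open>t > r(w\<^sub>1)\<close>; so the right-hand side
  is positive while the left-hand side is not.
\<close>

section \<open>The fundamental solution of the wave equation in dimensions one and two\<close>

definition sin_div :: "real \<Rightarrow> real \<Rightarrow> real" where
  "sin_div \<rho> t = (if \<rho> = 0 then t else sin (\<rho> * t) / \<rho>)"

lemma sin_quot_eq_sin_div: "sin_quot \<xi> t = sin_div (norm \<xi>) t"
  by (simp add: sin_quot_def sin_div_def)

lemma sin_div_abs [simp]: "sin_div \<bar>\<rho>\<bar> t = sin_div \<rho> t"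
  by (cases "\<rho> \<ge> 0") (auto simp: sin_div_def)

lemma has_vector_derivative_cis_linear:
  assumes "\<rho> \<noteq> 0"
  shows "((\<lambda>s. cis (\<rho> * s) / (\<i> * complex_of_real \<rho>)) has_vector_derivative cis (\<rho> * x)) (at x within A)"
proof -
  have "((\<lambda>s. cis (\<rho> * s)) has_derivative (\<lambda>h. (\<rho> * h) *\<^sub>R (\<i> * cis (\<rho> * x)))) (at x within A)"
    by (intro has_derivative_cis derivative_intros)
  then have "((\<lambda>s. cis (\<rho> * s)) has_vector_derivative (\<rho> *\<^sub>R (\<i> * cis (\<rho> * x)))) (at x within A)"
    unfolding has_vector_derivative_def by (simp add: mult.commute)
  then have "((\<lambda>s. cis (\<rho> * s) / (\<i> * complex_of_real \<rho>)) has_vector_derivative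
      (\<rho> *\<^sub>R (\<i> * cis (\<rho> * x))) / (\<i> * complex_of_real \<rho>)) (at x within A)"
    by (rule has_vector_derivative_divide)
  then show ?thesis
    using assms by (simp add: scaleR_conv_of_real field_simps)
qed

lemma integral_cis_symmetric_interval:
  assumes "t > 0"
  shows "(\<integral>s. indicator {-t<..<t} s *\<^sub>R cis (\<rho> * s) \<partial>lborel) = 2 * complex_of_real (sin_div \<rho> t)"
proof -
  have "(\<integral>s. indicator {-t<..<t} s *\<^sub>R cis (\<rho> * s) \<partial>lborel) = (LBINT s=-t..t. cis (\<rho> * s))"
    using assms by (simp add: interval_lebesgue_integral_def set_lebesgue_integral_def einterval_def
        greaterThanLessThan_def greaterThan_def lessThan_def Int_def)
  also have "\<dots> = 2 * complex_of_real (sin_div \<rho> t)"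
  proof (cases "\<rho> = 0")
    case True
    have "(LBINT s=-t..t. cis (\<rho> * s)) = complex_of_real t - complex_of_real (-t)"
      by (rule interval_integral_FTC_finite)
         (use True in \<open>auto intro!: continuous_intros derivative_eq_intros
            simp: has_vector_derivative_def scaleR_conv_of_real[abs_def]\<close>)
    then show ?thesis
      using True by (simp add: sin_div_def)
  next
    case False
    have "(LBINT s=-t..t. cis (\<rho> * s))
        = cis (\<rho> * t) / (\<i> * complex_of_real \<rho>) - cis (\<rho> * (-t)) / (\<i> * complex_of_real \<rho>)"
      by (rule interval_integral_FTC_finite)
         (use False in \<open>auto intro!: continuous_intros has_vector_derivative_cis_linear\<close>)
    also have "\<dots> = (cis (\<rho> * t) - cis (\<rho> * (-t))) / (\<i> * complex_of_real \<rho>)"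
      by (simp add: diff_divide_distrib)
    also have "cis (\<rho> * t) - cis (\<rho> * (-t)) = 2 * \<i> * complex_of_real (sin (\<rho> * t))"
      by (simp add: complex_eq_iff)
    also have "(2 * \<i> * complex_of_real (sin (\<rho> * t))) / (\<i> * complex_of_real \<rho>)
        = 2 * complex_of_real (sin_div \<rho> t)"
      using False by (simp add: sin_div_def field_simps)
    finally show ?thesis .
  qed
  finally show ?thesis .
qed

lemma
  assumes a: "a > 0"
  shows set_integrable_inverse_sqrt_diff_squares:
      "set_integrable lborel {-a<..<a} (\<lambda>v. 1 / sqrt (a\<^sup>2 - v\<^sup>2))"
    and set_integral_inverse_sqrt_diff_squares:
      "(LBINT v:{-a<..<a}. 1 / sqrt (a\<^sup>2 - v\<^sup>2)) = pi"
proof -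
  have interval: "einterval (-a) a = {-a<..<a}"
    by (auto simp: einterval_def)
  have inside: "v\<^sup>2 < a\<^sup>2" if "ereal (-a) < ereal v" "ereal v < ereal a" for v
  proof -
    have "0 < (a - v) * (a + v)"
      using that by (intro mult_pos_pos) auto
    then show ?thesis
      by (simp add: algebra_simps power2_eq_square)
  qed
  have cont: "continuous_on {-a..a} (\<lambda>v. arcsin (v / a))"
    using a by (intro continuous_intros) (auto simp: field_simps)
  have deriv: "((\<lambda>v. arcsin (v / a)) has_real_derivative 1 / sqrt (a\<^sup>2 - v\<^sup>2)) (at v)"
    if "ereal (-a) < ereal v" "ereal v < ereal a" for v
  proof -
    have "-1 < v / a" "v / a < 1"
      using that a by (auto simp: divide_simps)
    then have "((\<lambda>v. arcsin (v / a)) has_real_derivative inverse (sqrt (1 - (v/a)\<^sup>2)) * (1 / a)) (at v)"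
      by (intro DERIV_chain2[OF DERIV_arcsin]) (use a in \<open>auto intro!: derivative_eq_intros\<close>)
    moreover have "sqrt (1 - (v/a)\<^sup>2) = sqrt (a\<^sup>2 - v\<^sup>2) / a"
      using a by (simp add: power_divide real_sqrt_divide field_simps)
    ultimately show ?thesis
      using a by (simp add: field_simps)
  qed
  have isCont: "isCont (\<lambda>v. 1 / sqrt (a\<^sup>2 - v\<^sup>2)) v"
    if "ereal (-a) < ereal v" "ereal v < ereal a" for v
    using inside[OF that] by (intro continuous_intros) auto
  have nonneg: "AE v in lborel. ereal (-a) < ereal v \<longrightarrow> ereal v < ereal a \<longrightarrow> 0 \<le> 1 / sqrt (a\<^sup>2 - v\<^sup>2)"
    using inside by (intro AE_I2) (force simp del: ereal_less_eq ereal_less)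
  have lim_left: "(((\<lambda>v. arcsin (v / a)) \<circ> real_of_ereal) \<longlongrightarrow> arcsin (-a / a)) (at_right (ereal (-a)))"
    unfolding ereal_tendsto_simps1 using continuous_on_Icc_at_rightD[OF cont] a by simp
  have lim_right: "(((\<lambda>v. arcsin (v / a)) \<circ> real_of_ereal) \<longlongrightarrow> arcsin (a / a)) (at_left (ereal a))"
    unfolding ereal_tendsto_simps1 using continuous_on_Icc_at_leftD[OF cont] a by simp
  note FTC = interval_integral_FTC_nonneg[OF _ deriv isCont nonneg lim_left lim_right]
  show "set_integrable lborel {-a<..<a} (\<lambda>v. 1 / sqrt (a\<^sup>2 - v\<^sup>2))"
    using FTC(1) a interval by simp
  show "(LBINT v:{-a<..<a}. 1 / sqrt (a\<^sup>2 - v\<^sup>2)) = pi"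
    using FTC(2) a interval by (simp add: interval_lebesgue_integral_def)
qed

lemma borel_measurable_cis [measurable]: "cis \<in> borel_measurable borel"
  by (intro borel_measurable_continuous_onI continuous_intros)

lemma borel_measurable_fst [measurable]: "fst \<in> borel_measurable borel"
  by (intro borel_measurable_continuous_onI continuous_intros)

lemma borel_measurable_snd [measurable]: "snd \<in> borel_measurable borel"
  by (intro borel_measurable_continuous_onI continuous_intros)

definition wave_kernel_1d :: "real \<Rightarrow> 'a::real_normed_vector \<Rightarrow> real" where
  "wave_kernel_1d t y = (if norm y < t then 1 / 2 else 0)"

definition wave_kernel_2d :: "real \<Rightarrow> 'a::real_normed_vector \<Rightarrow> real" where
  "wave_kernel_2d t y = (if norm y < t then 1 / (2 * pi * sqrt (t\<^sup>2 - (norm y)\<^sup>2)) else 0)"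

lemma borel_measurable_wave_kernel_1d [measurable]:
  "(wave_kernel_1d t :: 'a::{real_normed_vector, second_countable_topology} \<Rightarrow> real) \<in> borel_measurable borel"
  unfolding wave_kernel_1d_def by measurable

lemma borel_measurable_wave_kernel_2d [measurable]:
  "(wave_kernel_2d t :: 'a::{real_normed_vector, second_countable_topology} \<Rightarrow> real) \<in> borel_measurable borel"
  unfolding wave_kernel_2d_def by measurable

lemma wave_kernel_2d_pos: "norm y < t \<Longrightarrow> 0 < wave_kernel_2d t y"
  by (simp add: wave_kernel_2d_def power_strict_mono)

lemma wave_kernel_2d_nonneg: "0 \<le> wave_kernel_2d t y"
  using wave_kernel_2d_pos[of y t] by (auto simp: wave_kernel_2d_def)

lemma wave_kernel_2d_slice:
  fixes s v :: real
  assumes "a > 0" "a\<^sup>2 = t\<^sup>2 - s\<^sup>2" "t > 0"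
  shows "wave_kernel_2d t (s, v) = indicator {-a<..<a} v * (1 / (2 * pi) * (1 / sqrt (a\<^sup>2 - v\<^sup>2)))"
proof -
  have "norm (s, v) < t \<longleftrightarrow> sqrt (s\<^sup>2 + v\<^sup>2) < sqrt (t\<^sup>2)"
    using assms(3) by (simp add: norm_Pair)
  also have "\<dots> \<longleftrightarrow> sqrt (v\<^sup>2) < sqrt (a\<^sup>2)"
    unfolding real_sqrt_less_iff using assms(2) by auto
  also have "\<dots> \<longleftrightarrow> v \<in> {-a<..<a}"
    using assms(1) by (auto simp: abs_less_iff)
  finally show ?thesis
    using assms(2) by (simp add: wave_kernel_2d_def norm_Pair indicator_def)
qed

lemma has_bochner_integral_wave_kernel_2d_slice:
  fixes s :: real
  assumes "t > 0"
  shows "has_bochner_integral lborel (\<lambda>v::real. wave_kernel_2d t (s, v)) (indicator {-t<..<t} s / 2)"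
proof (cases "\<bar>s\<bar> < t")
  case True
  define a where "a = sqrt (t\<^sup>2 - s\<^sup>2)"
  have "\<bar>s\<bar>\<^sup>2 < t\<^sup>2"
    using True by (intro power_strict_mono) auto
  then have a: "a > 0" "a\<^sup>2 = t\<^sup>2 - s\<^sup>2"
    by (auto simp: a_def)
  have "set_integrable lborel {-a<..<a} (\<lambda>v. 1 / (2 * pi) * (1 / sqrt (a\<^sup>2 - v\<^sup>2)))"
    using set_integrable_inverse_sqrt_diff_squares[OF a(1)] by (rule set_integrable_mult_right)
  moreover have "(LBINT v:{-a<..<a}. 1 / (2 * pi) * (1 / sqrt (a\<^sup>2 - v\<^sup>2)))
      = 1 / (2 * pi) * (LBINT v:{-a<..<a}. 1 / sqrt (a\<^sup>2 - v\<^sup>2))"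
    by (rule set_integral_mult_right)
  ultimately show ?thesis
    using True wave_kernel_2d_slice[OF a \<open>t > 0\<close>] set_integral_inverse_sqrt_diff_squares[OF a(1)]
    by (simp add: has_bochner_integral_iff set_integrable_def set_lebesgue_integral_def abs_less_iff)
next
  case False
  have "\<bar>s\<bar> \<le> norm (s, v)" for v :: real
    by (simp add: norm_Pair)
  then have "\<not> norm (s, v) < t" for v :: real
    using False by (meson order.strict_trans1)
  then have "wave_kernel_2d t (s, v) = 0" for v :: real
    by (simp add: wave_kernel_2d_def)
  then show ?thesis
    using False by (auto simp: abs_less_iff indicator_def has_bochner_integral_zero)
qed

lemmas integrable_wave_kernel_2d_slice =
  integrable.intros[OF has_bochner_integral_wave_kernel_2d_slice]

lemmas integral_wave_kernel_2d_slice =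
  has_bochner_integral_integral_eq[OF has_bochner_integral_wave_kernel_2d_slice]

lemma integrable_wave_kernel_2d:
  assumes t: "t > 0"
  shows "integrable lborel (wave_kernel_2d t :: real \<times> real \<Rightarrow> real)"
proof (rule integrableI_nonneg)
  have "(\<integral>\<^sup>+p. ennreal (wave_kernel_2d t (p :: real \<times> real)) \<partial>lborel)
      = (\<integral>\<^sup>+p. ennreal (wave_kernel_2d t (p :: real \<times> real)) \<partial>(lborel \<Otimes>\<^sub>M lborel))"
    by (simp add: lborel_prod)
  also have "\<dots> = (\<integral>\<^sup>+s. \<integral>\<^sup>+v. ennreal (wave_kernel_2d t (s::real, v::real)) \<partial>lborel \<partial>lborel)"
    by (rule lborel.nn_integral_fst[symmetric]) (simp add: lborel_prod)
  also have "\<dots> = (\<integral>\<^sup>+s. ennreal (1 / 2) * indicator {-t<..<t} s \<partial>lborel)"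
    using t by (intro nn_integral_cong)
      (simp add: nn_integral_eq_integral integrable_wave_kernel_2d_slice integral_wave_kernel_2d_slice
        wave_kernel_2d_nonneg indicator_def)
  also have "\<dots> = ennreal (1 / 2) * ennreal (2 * t)"
    using t by (simp add: nn_integral_cmult_indicator)
  also have "\<dots> = ennreal (1 / 2 * (2 * t))"
    using t by (intro ennreal_mult[symmetric]) auto
  finally show "(\<integral>\<^sup>+p. ennreal (wave_kernel_2d t (p :: real \<times> real)) \<partial>lborel) < \<infinity>"
    by simp
qed (auto simp: wave_kernel_2d_nonneg)

lemma fourier_wave_kernel_2d_fst:
  assumes t: "t > 0"
  shows "(\<integral>p. wave_kernel_2d t p *\<^sub>R cis (\<rho> * fst (p :: real \<times> real)) \<partial>lborel)
    = complex_of_real (sin_div \<rho> t)"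
proof -
  have "integrable lborel (\<lambda>p :: real \<times> real. wave_kernel_2d t p *\<^sub>R cis (\<rho> * fst p))"
    by (rule Bochner_Integration.integrable_bound[OF integrable_wave_kernel_2d[OF t]])
      (auto simp: wave_kernel_2d_nonneg)
  then have prod_integrable:
      "integrable (lborel \<Otimes>\<^sub>M lborel) (\<lambda>p :: real \<times> real. wave_kernel_2d t p *\<^sub>R cis (\<rho> * fst p))"
    by (simp add: lborel_prod)
  have "(\<integral>p. wave_kernel_2d t p *\<^sub>R cis (\<rho> * fst (p :: real \<times> real)) \<partial>lborel)
      = (\<integral>s. \<integral>v. wave_kernel_2d t (s, v::real) *\<^sub>R cis (\<rho> * s) \<partial>lborel \<partial>lborel)"
    using lborel_pair.integral_fst'[OF prod_integrable] by (simp add: lborel_prod)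
  also have "\<dots> = (\<integral>s. (\<integral>v. wave_kernel_2d t (s, v::real) \<partial>lborel) *\<^sub>R cis (\<rho> * s) \<partial>lborel)"
    by (simp add: integral_scaleR_left integrable_wave_kernel_2d_slice[OF t])
  also have "\<dots> = (1/2::real) *\<^sub>R (\<integral>s. indicator {-t<..<t} s *\<^sub>R cis (\<rho> * s) \<partial>lborel)"
    by (simp add: integral_wave_kernel_2d_slice[OF t] integral_scaleR_right[symmetric])
  finally show ?thesis
    using integral_cis_symmetric_interval[OF t, of \<rho>] by (simp add: scaleR_conv_of_real)
qed

definition plane_rotation :: "real \<Rightarrow> real \<Rightarrow> real \<times> real \<Rightarrow> real \<times> real" where
  "plane_rotation \<alpha> \<beta> p = (\<alpha> * fst p - \<beta> * snd p, \<beta> * fst p + \<alpha> * snd p)"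

lemma borel_measurable_plane_rotation [measurable]: "plane_rotation \<alpha> \<beta> \<in> borel_measurable borel"
  unfolding plane_rotation_def by measurable

lemma norm_plane_rotation:
  assumes "\<alpha>\<^sup>2 + \<beta>\<^sup>2 = 1"
  shows "norm (plane_rotation \<alpha> \<beta> p) = norm p"
proof -
  have "(\<alpha> * fst p - \<beta> * snd p)\<^sup>2 + (\<beta> * fst p + \<alpha> * snd p)\<^sup>2 = (\<alpha>\<^sup>2 + \<beta>\<^sup>2) * ((fst p)\<^sup>2 + (snd p)\<^sup>2)"
    by (simp add: algebra_simps power2_eq_square)
  then show ?thesis
    using assms by (simp add: plane_rotation_def norm_Pair norm_prod_def)
qed

lemma wave_kernel_2d_plane_rotation:
  assumes "\<alpha>\<^sup>2 + \<beta>\<^sup>2 = 1"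
  shows "wave_kernel_2d t (plane_rotation \<alpha> \<beta> p) = wave_kernel_2d t p"
  unfolding wave_kernel_2d_def norm_plane_rotation[OF assms] ..

lemma plane_rotation_compose:
  "plane_rotation \<alpha> \<beta> (plane_rotation \<alpha>' \<beta>' p) = plane_rotation (\<alpha> * \<alpha>' - \<beta> * \<beta>') (\<alpha> * \<beta>' + \<beta> * \<alpha>') p"
  by (simp add: plane_rotation_def algebra_simps)

text \<open>A rotation with \<open>\<alpha> \<noteq> 0\<close> is a composition of two shears, one along each axis.\<close>

lemma nn_integral_plane_rotation:
  assumes unit: "\<alpha>\<^sup>2 + \<beta>\<^sup>2 = 1" and "\<alpha> \<noteq> 0"
    and [measurable]: "f \<in> borel_measurable (borel :: (real \<times> real) measure)"
  shows "(\<integral>\<^sup>+p. f (plane_rotation \<alpha> \<beta> p) \<partial>lborel) = (\<integral>\<^sup>+p. f p \<partial>lborel)"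
proof -
  have shear: "s / \<alpha> - \<beta> * (\<beta> * s + \<alpha> * v) / \<alpha> = \<alpha> * s - \<beta> * v" for s v
  proof -
    have "s - \<beta> * (\<beta> * s + \<alpha> * v) = (\<alpha>\<^sup>2 + \<beta>\<^sup>2) * s - \<beta> * (\<beta> * s + \<alpha> * v)"
      using unit by simp
    also have "\<dots> = \<alpha> * (\<alpha> * s - \<beta> * v)"
      by (simp add: algebra_simps power2_eq_square)
    finally show ?thesis
      using \<open>\<alpha> \<noteq> 0\<close> by (simp add: diff_divide_distrib[symmetric])
  qed
  have "(\<integral>\<^sup>+p. f p \<partial>lborel) = (\<integral>\<^sup>+b. \<integral>\<^sup>+a. f (a, b) \<partial>lborel \<partial>lborel)"
    by (subst lborel_prod[symmetric], rule lborel_pair.nn_integral_snd[symmetric]) (simp add: lborel_prod)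
  also have "\<dots> = (\<integral>\<^sup>+b. ennreal \<bar>1/\<alpha>\<bar> * (\<integral>\<^sup>+s. f (- \<beta> * b / \<alpha> + (1/\<alpha>) * s, b) \<partial>lborel) \<partial>lborel)"
    by (rule nn_integral_cong, rule nn_integral_real_affine) (use \<open>\<alpha> \<noteq> 0\<close> in auto)
  also have "\<dots> = ennreal \<bar>1/\<alpha>\<bar> * (\<integral>\<^sup>+s. \<integral>\<^sup>+b. f (- \<beta> * b / \<alpha> + (1/\<alpha>) * s, b) \<partial>lborel \<partial>lborel)"
    by (subst lborel_pair.Fubini') (measurable, rule nn_integral_cmult, measurable)
  also have "\<dots> = ennreal \<bar>1/\<alpha>\<bar> * (\<integral>\<^sup>+s. ennreal \<bar>\<alpha>\<bar> * (\<integral>\<^sup>+v. f (plane_rotation \<alpha> \<beta> (s, v)) \<partial>lborel) \<partial>lborel)"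
  proof -
    have "(\<integral>\<^sup>+b. f (- \<beta> * b / \<alpha> + (1/\<alpha>) * s, b) \<partial>lborel)
        = ennreal \<bar>\<alpha>\<bar> * (\<integral>\<^sup>+v. f (plane_rotation \<alpha> \<beta> (s, v)) \<partial>lborel)" for s
      by (subst nn_integral_real_affine[where c = \<alpha> and t = "\<beta> * s"])
        (use \<open>\<alpha> \<noteq> 0\<close> in \<open>auto simp: shear plane_rotation_def\<close>)
    then show ?thesis
      by simp
  qed
  also have "\<dots> = ennreal \<bar>1/\<alpha>\<bar> * (ennreal \<bar>\<alpha>\<bar> * (\<integral>\<^sup>+p. f (plane_rotation \<alpha> \<beta> p) \<partial>lborel))"
    by (subst nn_integral_cmult, measurable)
      (subst lborel_prod[symmetric], subst lborel.nn_integral_fst, auto simp: lborel_prod)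
  also have "\<dots> = (\<integral>\<^sup>+p. f (plane_rotation \<alpha> \<beta> p) \<partial>lborel)"
    using \<open>\<alpha> \<noteq> 0\<close> by (simp add: mult.assoc[symmetric] ennreal_mult[symmetric] abs_mult[symmetric])
  finally show ?thesis
    by simp
qed

lemma distr_lborel_plane_rotation_nonzero:
  assumes "\<alpha>\<^sup>2 + \<beta>\<^sup>2 = 1" "\<alpha> \<noteq> 0"
  shows "distr lborel borel (plane_rotation \<alpha> \<beta>) = lborel"
proof (rule measure_eqI)
  fix A assume "A \<in> sets (distr lborel borel (plane_rotation \<alpha> \<beta>))"
  then have [measurable]: "A \<in> sets borel"
    by simp
  have "plane_rotation \<alpha> \<beta> -` A \<in> sets lborel"
    using measurable_sets_borel[OF borel_measurable_plane_rotation] by simp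
  then have "emeasure (distr lborel borel (plane_rotation \<alpha> \<beta>)) A
      = (\<integral>\<^sup>+p. indicator (plane_rotation \<alpha> \<beta> -` A) p \<partial>lborel)"
    by (simp add: emeasure_distr)
  also have "\<dots> = (\<integral>\<^sup>+p. indicator A (plane_rotation \<alpha> \<beta> p) \<partial>lborel)"
    by (simp add: indicator_def)
  also have "\<dots> = emeasure lborel A"
    using assms by (simp add: nn_integral_plane_rotation)
  finally show "emeasure (distr lborel borel (plane_rotation \<alpha> \<beta>)) A = emeasure lborel A" .
qed simp

lemma distr_lborel_plane_rotation:
  assumes "\<alpha>\<^sup>2 + \<beta>\<^sup>2 = 1"
  shows "distr lborel borel (plane_rotation \<alpha> \<beta>) = lborel"
proof (cases "\<alpha> = 0")
  case True
  define c where "c = 1 / sqrt 2"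
  have "c\<^sup>2 = 1 / 2"
    by (simp add: c_def power_divide)
  moreover have "\<beta>\<^sup>2 = 1"
    using assms True by simp
  ultimately have half: "c\<^sup>2 + (\<beta> * c)\<^sup>2 = 1" "c \<noteq> 0"
    by (auto simp: power_mult_distrib)
  have "c * c - (\<beta> * c) * (\<beta> * c) = c\<^sup>2 * (1 - \<beta>\<^sup>2)"
    by (simp add: power2_eq_square algebra_simps)
  also have "\<dots> = \<alpha>"
    using True \<open>\<beta>\<^sup>2 = 1\<close> by simp
  finally have cos: "c * c - (\<beta> * c) * (\<beta> * c) = \<alpha>" .
  have "c * (\<beta> * c) + (\<beta> * c) * c = 2 * c\<^sup>2 * \<beta>"
    by (simp add: power2_eq_square algebra_simps)
  also have "\<dots> = \<beta>"
    using \<open>c\<^sup>2 = 1 / 2\<close> by simp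
  finally have sin: "c * (\<beta> * c) + (\<beta> * c) * c = \<beta>" .
  have "plane_rotation \<alpha> \<beta> = plane_rotation c (\<beta> * c) \<circ> plane_rotation c (\<beta> * c)"
    \<comment> \<open>the quarter turn is the square of an eighth turn\<close>
    by (simp add: fun_eq_iff plane_rotation_compose cos sin)
  then have "distr lborel borel (plane_rotation \<alpha> \<beta>)
      = distr (distr lborel borel (plane_rotation c (\<beta> * c))) borel (plane_rotation c (\<beta> * c))"
    by (subst distr_distr) simp_all
  then show ?thesis
    using distr_lborel_plane_rotation_nonzero[OF half] by simp
qed (use assms distr_lborel_plane_rotation_nonzero in auto)

lemma fourier_wave_kernel_2d:
  assumes t: "t > 0"
  shows "(\<integral>p. wave_kernel_2d t p *\<^sub>R cis (a * fst p + b * snd (p :: real \<times> real)) \<partial>lborel)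
    = complex_of_real (sin_div (sqrt (a\<^sup>2 + b\<^sup>2)) t)"
proof (cases "a = 0 \<and> b = 0")
  case True
  then show ?thesis
    using fourier_wave_kernel_2d_fst[OF t, of 0] by simp
next
  case False
  define \<rho> where "\<rho> = sqrt (a\<^sup>2 + b\<^sup>2)"
  have "\<rho> > 0"
    using False by (auto simp: \<rho>_def add_pos_nonneg add_nonneg_pos)
  have unit: "(a / \<rho>)\<^sup>2 + (b / \<rho>)\<^sup>2 = 1"
    using \<open>\<rho> > 0\<close> False by (auto simp: \<rho>_def power_divide add_divide_distrib[symmetric])
  have phase: "a * fst (plane_rotation (a / \<rho>) (b / \<rho>) p) + b * snd (plane_rotation (a / \<rho>) (b / \<rho>) p)
      = \<rho> * fst p" for p
    \<comment> \<open>the rotation turns the frequency \<open>(a, b)\<close> into \<open>(\<rho>, 0)\<close>\<close>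
  proof -
    have "a * fst (plane_rotation (a / \<rho>) (b / \<rho>) p) + b * snd (plane_rotation (a / \<rho>) (b / \<rho>) p)
        = (a\<^sup>2 + b\<^sup>2) / \<rho> * fst p"
      using \<open>\<rho> > 0\<close> by (simp add: plane_rotation_def field_simps power2_eq_square)
    also have "(a\<^sup>2 + b\<^sup>2) / \<rho> = \<rho>"
      by (simp add: \<rho>_def real_div_sqrt)
    finally show ?thesis .
  qed
  have "(\<integral>p. wave_kernel_2d t p *\<^sub>R cis (a * fst p + b * snd (p :: real \<times> real)) \<partial>lborel)
      = (\<integral>p. wave_kernel_2d t p *\<^sub>R cis (a * fst p + b * snd p)
          \<partial>distr lborel borel (plane_rotation (a / \<rho>) (b / \<rho>)))"
    by (simp add: distr_lborel_plane_rotation[OF unit])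
  also have "\<dots> = (\<integral>p. wave_kernel_2d t p *\<^sub>R cis (\<rho> * fst (p :: real \<times> real)) \<partial>lborel)"
    by (subst integral_distr) (simp_all add: phase wave_kernel_2d_plane_rotation[OF unit])
  finally show ?thesis
    using fourier_wave_kernel_2d_fst[OF t] by (simp add: \<rho>_def)
qed

lemma lborel_eqI_cart:
  fixes M :: "(real^'n) measure"
  assumes "\<And>l u. (\<And>k. l $ k \<le> u $ k) \<Longrightarrow> emeasure M (box l u) = ennreal (\<Prod>k\<in>UNIV. u $ k - l $ k)"
    and "sets M = sets borel"
  shows "lborel = M"
proof (rule lborel_eqI)
  fix l u :: "real^'n"
  assume "\<And>b. b \<in> Basis \<Longrightarrow> l \<bullet> b \<le> u \<bullet> b"
  then have "l $ k \<le> u $ k" for k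
    by (simp add: cart_eq_inner_axis)
  moreover have "(\<Prod>b\<in>Basis. (u - l) \<bullet> b) = (\<Prod>k\<in>UNIV. u $ k - l $ k)"
    by (simp add: Basis_vec_def cart_eq_inner_axis axis_eq_axis prod.UNION_disjoint inner_diff_left)
  ultimately show "emeasure M (box l u) = ennreal (\<Prod>b\<in>Basis. (u - l) \<bullet> b)"
    using assms(1) by simp
qed (rule assms(2))

lemma borel_measurable_vec [measurable]: "vec \<in> borel_measurable borel"
  unfolding vec_def by (intro borel_measurable_continuous_onI continuous_on_vec_lambda continuous_on_id)

lemma lborel_eq_distr_vec:
  assumes UNIV: "UNIV = {i :: 'n::finite}"
  shows "(lborel :: (real^'n) measure) = distr lborel borel vec"
proof (rule lborel_eqI_cart)
  have all: "(\<forall>k. P k) \<longleftrightarrow> P i" for P :: "'n \<Rightarrow> bool"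
    by (metis UNIV UNIV_I singletonD)
  fix l u :: "real^'n"
  assume "\<And>k. l $ k \<le> u $ k"
  moreover have "vec -` box l u = {l $ i <..< u $ i}"
    by (auto simp: mem_box_cart all)
  moreover have "(\<Prod>k\<in>UNIV. u $ k - l $ k) = u $ i - l $ i"
    by (simp add: UNIV)
  ultimately show "emeasure (distr lborel borel vec) (box l u) = ennreal (\<Prod>k\<in>UNIV. u $ k - l $ k)"
    by (simp add: emeasure_distr)
qed simp

definition vec_pair :: "'n \<Rightarrow> real \<times> real \<Rightarrow> real^'n" where
  "vec_pair i p = (\<chi> k. if k = i then fst p else snd p)"

lemma borel_measurable_vec_pair [measurable]: "vec_pair i \<in> borel_measurable borel"
  unfolding vec_pair_def
proof (intro borel_measurable_continuous_onI continuous_on_vec_lambda)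
  show "continuous_on UNIV (\<lambda>p :: real \<times> real. if k = i then fst p else snd p)" for k
    by (cases "k = i") (auto intro: continuous_intros)
qed

lemma lborel_eq_distr_vec_pair:
  assumes "i \<noteq> j" and UNIV: "UNIV = {i, j :: 'n::finite}"
  shows "(lborel :: (real^'n) measure) = distr lborel borel (vec_pair i)"
proof (rule lborel_eqI_cart)
  have all: "(\<forall>k. P k) \<longleftrightarrow> P i \<and> P j" for P :: "'n \<Rightarrow> bool"
    by (metis UNIV UNIV_I insertE singletonD)
  fix l u :: "real^'n"
  assume le: "\<And>k. l $ k \<le> u $ k"
  have "vec_pair i -` box l u = {l $ i <..< u $ i} \<times> {l $ j <..< u $ j}"
    using \<open>i \<noteq> j\<close> by (auto simp: mem_box_cart all vec_pair_def)
  then have "emeasure (distr lborel borel (vec_pair i)) (box l u)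
      = emeasure (lborel \<Otimes>\<^sub>M lborel) ({l $ i <..< u $ i} \<times> {l $ j <..< u $ j})"
    by (simp add: emeasure_distr lborel_prod)
  also have "\<dots> = ennreal ((u $ i - l $ i) * (u $ j - l $ j))"
    using le[of i] le[of j] by (simp add: lborel.emeasure_pair_measure_Times ennreal_mult)
  also have "(u $ i - l $ i) * (u $ j - l $ j) = (\<Prod>k\<in>UNIV. u $ k - l $ k)"
    using \<open>i \<noteq> j\<close> by (simp add: UNIV)
  finally show "emeasure (distr lborel borel (vec_pair i)) (box l u) = ennreal (\<Prod>k\<in>UNIV. u $ k - l $ k)" .
qed simp

text \<open>Only meaningful for \<^term>\<open>CARD('n) \<in> {1, 2}\<close>; all results about it assume this.\<close>

definition wave_kernel :: "real \<Rightarrow> real^'n \<Rightarrow> real" where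
  "wave_kernel t = (if CARD('n) = 1 then wave_kernel_1d t else wave_kernel_2d t)"

lemma borel_measurable_wave_kernel [measurable]: "wave_kernel t \<in> borel_measurable borel"
  unfolding wave_kernel_def by (cases "CARD('n) = 1") simp_all

lemma wave_kernel_pos: "norm y < t \<Longrightarrow> 0 < wave_kernel t y"
  by (simp add: wave_kernel_def wave_kernel_1d_def wave_kernel_2d_pos)

lemma wave_kernel_nonneg: "0 \<le> wave_kernel t y"
  by (simp add: wave_kernel_def wave_kernel_1d_def wave_kernel_2d_nonneg)

lemma wave_kernel_1d_vec:
  assumes "UNIV = {i :: 'n::finite}" and t: "t > 0"
  shows "integrable lborel (wave_kernel_1d t :: real^'n \<Rightarrow> real)"
    and "(\<integral>y. wave_kernel_1d t y *\<^sub>R cis (\<xi> \<bullet> y) \<partial>lborel) = complex_of_real (sin_quot (\<xi> :: real^'n) t)"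
proof -
  have sum: "sum f UNIV = f i" for f :: "'n \<Rightarrow> real"
    by (simp add: assms(1))
  have "CARD('n) = 1"
    by (simp add: assms(1))
  then have kernel: "wave_kernel_1d t (vec a :: real^'n) = indicator {-t<..<t} a / 2" for a
    by (auto simp: wave_kernel_1d_def norm_vec_def L2_set_def sum indicator_def abs_less_iff)
  have "integrable lborel (\<lambda>a::real. indicator {-t<..<t} a / 2 :: real)"
    using t by (intro integrable_divide integrable_real_indicator) auto
  then show "integrable lborel (wave_kernel_1d t :: real^'n \<Rightarrow> real)"
    by (subst lborel_eq_distr_vec[OF assms(1)], subst integrable_distr_eq) (simp_all add: kernel)
  have "(\<integral>y. wave_kernel_1d t y *\<^sub>R cis (\<xi> \<bullet> y) \<partial>lborel)
      = (\<integral>a. (1/2::real) *\<^sub>R (indicator {-t<..<t} a *\<^sub>R cis (\<xi> $ i * a)) \<partial>lborel)"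
    by (subst lborel_eq_distr_vec[OF assms(1)], subst integral_distr)
      (simp_all add: kernel inner_vec_def sum mult.commute)
  also have "\<dots> = complex_of_real (sin_div (\<xi> $ i) t)"
    using integral_cis_symmetric_interval[OF t] by (simp add: scaleR_conv_of_real)
  also have "sin_div (\<xi> $ i) t = sin_quot \<xi> t"
    by (simp add: sin_quot_eq_sin_div norm_vec_def L2_set_def sum)
  finally show "(\<integral>y. wave_kernel_1d t y *\<^sub>R cis (\<xi> \<bullet> y) \<partial>lborel) = complex_of_real (sin_quot \<xi> t)" .
qed

lemma wave_kernel_2d_vec:
  assumes "i \<noteq> j" "UNIV = {i, j :: 'n::finite}" and t: "t > 0"
  shows "integrable lborel (wave_kernel_2d t :: real^'n \<Rightarrow> real)"
    and "(\<integral>y. wave_kernel_2d t y *\<^sub>R cis (\<xi> \<bullet> y) \<partial>lborel) = complex_of_real (sin_quot (\<xi> :: real^'n) t)"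
proof -
  have sum: "sum f UNIV = f i + f j" for f :: "'n \<Rightarrow> real"
    using assms(1) by (simp add: assms(2))
  have norm: "norm (vec_pair i p :: real^'n) = norm p" for p
    using assms(1) by (simp add: norm_vec_def L2_set_def sum vec_pair_def norm_prod_def)
  have inner: "\<xi> \<bullet> vec_pair i p = \<xi> $ i * fst p + \<xi> $ j * snd p" for p
    using assms(1) by (simp add: inner_vec_def sum vec_pair_def)
  have kernel: "wave_kernel_2d t (vec_pair i p :: real^'n) = wave_kernel_2d t p" for p
    unfolding wave_kernel_2d_def norm ..
  show "integrable lborel (wave_kernel_2d t :: real^'n \<Rightarrow> real)"
    using integrable_wave_kernel_2d[OF t]
    by (subst lborel_eq_distr_vec_pair[OF assms(1,2)], subst integrable_distr_eq) (simp_all add: kernel)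
  have "(\<integral>y. wave_kernel_2d t y *\<^sub>R cis (\<xi> \<bullet> y) \<partial>lborel)
      = (\<integral>p. wave_kernel_2d t p *\<^sub>R cis (\<xi> $ i * fst p + \<xi> $ j * snd (p :: real \<times> real)) \<partial>lborel)"
    by (subst lborel_eq_distr_vec_pair[OF assms(1,2)], subst integral_distr) (simp_all add: kernel inner)
  also have "\<dots> = complex_of_real (sin_div (sqrt ((\<xi> $ i)\<^sup>2 + (\<xi> $ j)\<^sup>2)) t)"
    by (rule fourier_wave_kernel_2d[OF t])
  also have "sin_div (sqrt ((\<xi> $ i)\<^sup>2 + (\<xi> $ j)\<^sup>2)) t = sin_quot \<xi> t"
    by (simp add: sin_quot_eq_sin_div norm_vec_def L2_set_def sum)
  finally show "(\<integral>y. wave_kernel_2d t y *\<^sub>R cis (\<xi> \<bullet> y) \<partial>lborel) = complex_of_real (sin_quot \<xi> t)" .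
qed

lemma
  assumes "CARD('n) \<in> {1, 2}" and "t > 0"
  shows integrable_wave_kernel: "integrable lborel (wave_kernel t :: real^'n \<Rightarrow> real)"
    and fourier_wave_kernel:
      "(\<integral>y. wave_kernel t y *\<^sub>R cis (\<xi> \<bullet> y) \<partial>lborel) = complex_of_real (sin_quot (\<xi> :: real^'n) t)"
proof -
  have "(\<exists>i::'n. UNIV = {i}) \<or> (\<exists>i j::'n. i \<noteq> j \<and> UNIV = {i, j})"
    using assms(1) card_1_singleton_iff[of "UNIV :: 'n set"] card_2_iff[of "UNIV :: 'n set"] by auto
  then have "integrable lborel (wave_kernel t :: real^'n \<Rightarrow> real)
    \<and> (\<integral>y. wave_kernel t y *\<^sub>R cis (\<xi> \<bullet> y) \<partial>lborel) = complex_of_real (sin_quot \<xi> t)"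
  proof (elim disjE exE conjE)
    fix i :: 'n
    assume UNIV: "UNIV = {i}"
    then have "CARD('n) = 1"
      by (simp add: UNIV)
    then show ?thesis
      using wave_kernel_1d_vec[OF UNIV \<open>t > 0\<close>] by (simp add: wave_kernel_def)
  next
    fix i j :: 'n
    assume "i \<noteq> j" and UNIV: "UNIV = {i, j}"
    then have "CARD('n) = 2"
      by (simp add: UNIV)
    then show ?thesis
      using wave_kernel_2d_vec[OF \<open>i \<noteq> j\<close> UNIV \<open>t > 0\<close>] by (simp add: wave_kernel_def)
  qed
  then show "integrable lborel (wave_kernel t :: real^'n \<Rightarrow> real)"
    "(\<integral>y. wave_kernel t y *\<^sub>R cis (\<xi> \<bullet> y) \<partial>lborel) = complex_of_real (sin_quot \<xi> t)"
    by auto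
qed

section \<open>The torus and its trigonometric polynomials\<close>

lemma int_vec_add: "int_vec a \<Longrightarrow> int_vec b \<Longrightarrow> int_vec (a + b)"
  by (auto simp: int_vec_def)

lemma int_vec_uminus: "int_vec a \<Longrightarrow> int_vec (- a)"
  by (auto simp: int_vec_def)

lemma int_vec_zero: "int_vec 0"
  by (auto simp: int_vec_def)

lemma int_vec_axis: "int_vec (axis i 1)"
  by (auto simp: int_vec_def axis_def)

lemma countable_int_vec: "countable {k :: real^'n. int_vec k}"
proof -
  have "{k :: real^'n. int_vec k} \<subseteq> (\<lambda>m. \<chi> i. of_int (m i)) ` (UNIV \<rightarrow>\<^sub>E (UNIV :: int set))"
  proof
    fix k :: "real^'n"
    assume "k \<in> {k. int_vec k}"
    then have "\<forall>i. \<exists>n::int. k $ i = of_int n"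
      by (auto simp: int_vec_def Ints_def)
    then obtain m where "\<And>i. k $ i = of_int (m i)"
      by metis
    then show "k \<in> (\<lambda>m. \<chi> i. of_int (m i)) ` (UNIV \<rightarrow>\<^sub>E UNIV)"
      by (intro image_eqI[of _ _ m]) (auto simp: vec_eq_iff)
  qed
  then show ?thesis
    by (rule countable_subset) (intro countable_image countable_PiE; simp)
qed

definition lattice_floor :: "real^'n \<Rightarrow> real^'n" where
  "lattice_floor x = (\<chi> i. of_int \<lfloor>x $ i / (2 * pi)\<rfloor>)"

lemma int_vec_lattice_floor: "int_vec (lattice_floor x)"
  by (simp add: int_vec_def lattice_floor_def)

lemma diff_lattice_floor_in_torus_cube: "x - (2 * pi) *\<^sub>R lattice_floor x \<in> torus_cube"
proof -
  have "0 \<le> x $ i - 2 * pi * of_int \<lfloor>x $ i / (2 * pi)\<rfloor> \<and> x $ i - 2 * pi * of_int \<lfloor>x $ i / (2 * pi)\<rfloor> \<le> 2 * pi"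
    for i
  proof -
    have "of_int \<lfloor>x $ i / (2 * pi)\<rfloor> \<le> x $ i / (2 * pi)" "x $ i / (2 * pi) \<le> of_int \<lfloor>x $ i / (2 * pi)\<rfloor> + 1"
      by linarith+
    then have "2 * pi * of_int \<lfloor>x $ i / (2 * pi)\<rfloor> \<le> 2 * pi * (x $ i / (2 * pi))"
        "2 * pi * (x $ i / (2 * pi)) \<le> 2 * pi * (of_int \<lfloor>x $ i / (2 * pi)\<rfloor> + 1)"
      by (intro mult_left_mono; simp)+
    then show ?thesis
      by (simp add: algebra_simps)
  qed
  then show ?thesis
    by (simp add: torus_cube_def mem_box_cart lattice_floor_def)
qed

text \<open>The torus as a compact subset of \<open>\<complex>\<^sup>n\<close>: its periodic subsets are exactly the preimages
  \<^term>\<open>torus_emb -` F\<close>.\<close>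

definition torus_emb :: "real^'n \<Rightarrow> complex^'n" where
  "torus_emb x = (\<chi> i. cis (x $ i))"

lemma continuous_on_torus_emb: "continuous_on S torus_emb"
  unfolding torus_emb_def by (intro continuous_on_vec_lambda continuous_intros)

lemma torus_emb_periodic: "int_vec k \<Longrightarrow> torus_emb (x + (2 * pi) *\<^sub>R k) = torus_emb x"
  by (auto simp: torus_emb_def int_vec_def vec_eq_iff cis_mult[symmetric] elim!: Ints_cases)

lemma torus_emb_eqD:
  fixes x y :: "real^'n"
  assumes "torus_emb x = torus_emb y"
  shows "\<exists>k. int_vec k \<and> x = y + (2 * pi) *\<^sub>R k"
proof -
  have "\<exists>n::int. x $ i = y $ i + 2 * pi * of_int n" for i
  proof -
    have "exp (\<i> * complex_of_real (x $ i)) = exp (\<i> * complex_of_real (y $ i))"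
      using assms by (simp add: torus_emb_def vec_eq_iff cis_conv_exp)
    then obtain n :: int where
      "\<i> * complex_of_real (x $ i) = \<i> * complex_of_real (y $ i) + complex_of_real (of_int (2 * n) * pi) * \<i>"
      unfolding exp_eq by blast
    then have "x $ i = y $ i + 2 * pi * of_int n"
      by (simp add: complex_eq_iff)
    then show ?thesis ..
  qed
  then obtain n :: "'n \<Rightarrow> int" where "\<And>i :: 'n. x $ i = y $ i + 2 * pi * of_int (n i)"
    by metis
  then show ?thesis
    by (intro exI[of _ "\<chi> i. of_int (n i)"]) (simp add: int_vec_def vec_eq_iff)
qed

lemma range_torus_emb: "range torus_emb = torus_emb ` torus_cube"
proof -
  have "torus_emb x = torus_emb (x - (2 * pi) *\<^sub>R lattice_floor x)" for x :: "real^'n"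
    using torus_emb_periodic[OF int_vec_lattice_floor, of "x - (2 * pi) *\<^sub>R lattice_floor x" x] by simp
  then show ?thesis
    using diff_lattice_floor_in_torus_cube by blast
qed

lemma compact_range_torus_emb: "compact (range (torus_emb :: real^'n \<Rightarrow> complex^'n))"
  unfolding range_torus_emb torus_cube_def
  by (intro compact_continuous_image continuous_on_torus_emb compact_cbox)

inductive_set trig_poly :: "(real^'n \<Rightarrow> complex) set" where
  monomial: "int_vec k \<Longrightarrow> (\<lambda>x. c * cis (k \<bullet> x)) \<in> trig_poly"
| add: "p \<in> trig_poly \<Longrightarrow> q \<in> trig_poly \<Longrightarrow> (\<lambda>x. p x + q x) \<in> trig_poly"

lemma trig_poly_continuous: "q \<in> trig_poly \<Longrightarrow> continuous_on S q"
  by (induction rule: trig_poly.induct) (auto intro!: continuous_intros)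

lemma trig_poly_borel_measurable: "q \<in> trig_poly \<Longrightarrow> q \<in> borel_measurable borel"
  by (intro borel_measurable_continuous_onI trig_poly_continuous)

lemma trig_poly_bounded: "q \<in> trig_poly \<Longrightarrow> \<exists>B. \<forall>x. norm (q x) \<le> B"
proof (induction rule: trig_poly.induct)
  case (monomial k c)
  then show ?case
    by (intro exI[of _ "norm c"]) (simp add: norm_mult)
next
  case (add p q)
  then obtain B C where "\<And>x. norm (p x) \<le> B" "\<And>x. norm (q x) \<le> C"
    by blast
  then have "norm (p x + q x) \<le> B + C" for x
    by (meson add_mono norm_triangle_le)
  then show ?case
    by blast
qed

lemma trig_poly_mult_monomial:
  "q \<in> trig_poly \<Longrightarrow> int_vec k \<Longrightarrow> (\<lambda>x. c * cis (k \<bullet> x) * q x) \<in> trig_poly"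
proof (induction rule: trig_poly.induct)
  case (monomial l d)
  have "(\<lambda>x. c * cis (k \<bullet> x) * (d * cis (l \<bullet> x))) = (\<lambda>x. (c * d) * cis ((k + l) \<bullet> x))"
    by (simp add: fun_eq_iff inner_add_left cis_mult[symmetric] mult_ac)
  then show ?case
    using monomial by (simp add: trig_poly.monomial int_vec_add)
next
  case (add p q)
  then show ?case
    by (simp add: distrib_left trig_poly.add)
qed

lemma trig_poly_mult: "p \<in> trig_poly \<Longrightarrow> q \<in> trig_poly \<Longrightarrow> (\<lambda>x. p x * q x) \<in> trig_poly"
proof (induction rule: trig_poly.induct)
  case (monomial k c)
  then show ?case
    by (blast intro: trig_poly_mult_monomial)
next
  case (add p p')
  then show ?case
    by (simp add: distrib_right trig_poly.add)
qed

lemma trig_poly_const: "(\<lambda>_. c) \<in> trig_poly"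
  using trig_poly.monomial[OF int_vec_zero, of c] by simp

lemma trig_poly_Re_torus_emb: "(\<lambda>x. complex_of_real (Re (torus_emb x $ i))) \<in> trig_poly"
proof -
  have "(\<lambda>x. 1/2 * cis (axis i 1 \<bullet> x) + 1/2 * cis ((- axis i 1) \<bullet> x)) \<in> trig_poly"
    by (intro trig_poly.add trig_poly.monomial int_vec_axis int_vec_uminus)
  moreover have "(\<lambda>x. 1/2 * cis (axis i 1 \<bullet> x) + 1/2 * cis ((- axis i 1) \<bullet> x))
      = (\<lambda>x. complex_of_real (Re (torus_emb x $ i)))"
    by (simp add: fun_eq_iff torus_emb_def inner_axis' complex_eq_iff)
  ultimately show ?thesis
    by simp
qed

lemma trig_poly_Im_torus_emb: "(\<lambda>x. complex_of_real (Im (torus_emb x $ i))) \<in> trig_poly"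
proof -
  have "(\<lambda>x. - \<i>/2 * cis (axis i 1 \<bullet> x) + \<i>/2 * cis ((- axis i 1) \<bullet> x)) \<in> trig_poly"
    by (intro trig_poly.add trig_poly.monomial int_vec_axis int_vec_uminus)
  moreover have "(\<lambda>x. - \<i>/2 * cis (axis i 1 \<bullet> x) + \<i>/2 * cis ((- axis i 1) \<bullet> x))
      = (\<lambda>x. complex_of_real (Im (torus_emb x $ i)))"
    by (simp add: fun_eq_iff torus_emb_def inner_axis' complex_eq_iff)
  ultimately show ?thesis
    by simp
qed

text \<open>Stone--Weierstrass on the compact set \<^term>\<open>range torus_emb\<close>.\<close>

lemma trig_poly_dense:
  fixes h :: "complex^'n \<Rightarrow> real"
  assumes "continuous_on (range torus_emb) h" and "e > 0"
  obtains q where "q \<in> trig_poly" "\<And>x::real^'n. norm (complex_of_real (h (torus_emb x)) - q x) < e"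
proof -
  define P where "P r \<longleftrightarrow> continuous_on UNIV r
    \<and> (\<exists>q\<in>trig_poly. \<forall>x::real^'n. complex_of_real (r (torus_emb x)) = q x)" for r :: "complex^'n \<Rightarrow> real"
  have "\<exists>r. P r \<and> (\<forall>z\<in>range torus_emb. \<bar>h z - r z\<bar> < e)"
  proof (rule Stone_Weierstrass_HOL[OF compact_range_torus_emb _ _ _ _ _ assms])
    show "P (\<lambda>_. c)" for c
      by (auto simp: P_def intro!: bexI[OF _ trig_poly_const])
    show "continuous_on (range torus_emb) r" if "P r" for r
      using that continuous_on_subset by (auto simp: P_def)
    show "P (\<lambda>z. r z + s z)" if "P r \<and> P s" for r s
      using that by (auto simp: P_def intro!: continuous_intros bexI[OF _ trig_poly.add])
    show "P (\<lambda>z. r z * s z)" if "P r \<and> P s" for r s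
      using that by (auto simp: P_def intro!: continuous_intros bexI[OF _ trig_poly_mult])
    show "\<exists>r. P r \<and> r z \<noteq> r z'" if distinct: "z \<in> range torus_emb \<and> z' \<in> range torus_emb \<and> z \<noteq> z'" for z z'
    proof -
      obtain i where "z $ i \<noteq> z' $ i"
        using distinct by (metis vec_eq_iff)
      then have "Re (z $ i) \<noteq> Re (z' $ i) \<or> Im (z $ i) \<noteq> Im (z' $ i)"
        by (simp add: complex_eq_iff)
      moreover have "P (\<lambda>z. Re (z $ i))"
        unfolding P_def by (auto intro!: continuous_intros bexI[OF _ trig_poly_Re_torus_emb])
      moreover have "P (\<lambda>z. Im (z $ i))"
        unfolding P_def by (auto intro!: continuous_intros bexI[OF _ trig_poly_Im_torus_emb])
      ultimately show ?thesis
        by blast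
    qed
  qed
  then obtain r q where "q \<in> trig_poly" "\<And>x. complex_of_real (r (torus_emb x)) = q x"
    and "\<And>z. z \<in> range torus_emb \<Longrightarrow> \<bar>h z - r z\<bar> < e"
    unfolding P_def by blast
  then show ?thesis
    using that[of q] by (metis norm_of_real of_real_diff rangeI)
qed

section \<open>Correlation and the weak form of a Fourier multiplier\<close>

lemma integrable_scaleR_bounded:
  fixes f :: "'a \<Rightarrow> real" and g :: "'a \<Rightarrow> 'b::{banach, second_countable_topology}"
  assumes "integrable M f" "g \<in> borel_measurable M" "\<And>x. norm (g x) \<le> B"
  shows "integrable M (\<lambda>x. f x *\<^sub>R g x)"
proof (rule Bochner_Integration.integrable_bound[OF integrable_scaleR_right[OF assms(1), of B]])
  show "(\<lambda>x. f x *\<^sub>R g x) \<in> borel_measurable M"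
    using assms(1,2) by measurable
  have "0 \<le> B"
    using assms(3) norm_ge_zero order_trans by blast
  moreover have "\<bar>f x\<bar> * norm (g x) \<le> \<bar>f x\<bar> * B" for x
    using assms(3) by (intro mult_left_mono) auto
  ultimately show "AE x in M. norm (f x *\<^sub>R g x) \<le> norm (B *\<^sub>R f x)"
    by (intro AE_I2) (simp add: abs_mult mult.commute)
qed

text \<open>For even \<open>K\<close>, as here, this coincides with the convolution \<open>K * \<phi>\<close>.\<close>

definition correlation ::
    "('a::euclidean_space \<Rightarrow> real) \<Rightarrow> ('a \<Rightarrow> 'b::{banach, second_countable_topology}) \<Rightarrow> 'a \<Rightarrow> 'b" where
  "correlation K \<phi> x = (\<integral>y. K y *\<^sub>R \<phi> (x + y) \<partial>lborel)"

context
  fixes K :: "'a::euclidean_space \<Rightarrow> real" and \<phi> :: "'a \<Rightarrow> 'b::{banach, second_countable_topology}"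
  assumes K [measurable]: "K \<in> borel_measurable borel" and \<phi> [measurable]: "\<phi> \<in> borel_measurable borel"
begin

lemma borel_measurable_correlation [measurable]: "correlation K \<phi> \<in> borel_measurable borel"
proof -
  have "(\<lambda>(x, y). K y *\<^sub>R \<phi> (x + y)) \<in> borel_measurable (lborel \<Otimes>\<^sub>M (lborel :: 'a measure))"
    by measurable
  then show ?thesis
    unfolding correlation_def using lborel.borel_measurable_lebesgue_integral by simp
qed

lemma integrable_correlation_integrand:
  "integrable lborel K \<Longrightarrow> (\<And>x. norm (\<phi> x) \<le> B) \<Longrightarrow> integrable lborel (\<lambda>y. K y *\<^sub>R \<phi> (x + y))"
  by (rule integrable_scaleR_bounded) auto

lemma norm_correlation_le:
  assumes "integrable lborel K" "\<And>x. norm (\<phi> x) \<le> B"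
  shows "norm (correlation K \<phi> x) \<le> B * (\<integral>y. \<bar>K y\<bar> \<partial>lborel)"
proof -
  have "norm (correlation K \<phi> x) \<le> (\<integral>y. norm (K y *\<^sub>R \<phi> (x + y)) \<partial>lborel)"
    unfolding correlation_def by (rule integral_norm_bound)
  also have "\<dots> \<le> (\<integral>y. B * \<bar>K y\<bar> \<partial>lborel)"
  proof (rule integral_mono)
    show "integrable lborel (\<lambda>y. norm (K y *\<^sub>R \<phi> (x + y)))"
      using integrable_correlation_integrand[OF assms] by (rule integrable_norm)
    show "norm (K y *\<^sub>R \<phi> (x + y)) \<le> B * \<bar>K y\<bar>" for y
      using assms(2)[of "x + y"] by (simp add: mult.commute[of B] mult_left_mono)
  qed (use assms(1) in simp)
  finally show ?thesis
    by simp
qed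

end

lemma tendsto_correlation:
  fixes \<phi> :: "nat \<Rightarrow> 'a::euclidean_space \<Rightarrow> 'b::{banach, second_countable_topology}"
  assumes "integrable lborel K" "K \<in> borel_measurable borel"
    and "\<And>m. \<phi> m \<in> borel_measurable borel" "\<And>m x. norm (\<phi> m x) \<le> B" "\<And>x. (\<lambda>m. \<phi> m x) \<longlonglongrightarrow> \<psi> x"
  shows "(\<lambda>m. correlation K (\<phi> m) x) \<longlonglongrightarrow> correlation K \<psi> x"
  unfolding correlation_def
proof (rule integral_dominated_convergence[where w = "\<lambda>y. \<bar>K y\<bar> * B"])
  show "(\<lambda>y. K y *\<^sub>R \<psi> (x + y)) \<in> borel_measurable lborel"
    using assms(2) borel_measurable_LIMSEQ_metric[OF assms(3,5)] by measurable
  show "(\<lambda>y. K y *\<^sub>R \<phi> m (x + y)) \<in> borel_measurable lborel" for m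
    using assms(2,3) by measurable
  show "integrable lborel (\<lambda>y. \<bar>K y\<bar> * B)"
    using assms(1) by simp
  show "AE y in lborel. (\<lambda>m. K y *\<^sub>R \<phi> m (x + y)) \<longlonglongrightarrow> K y *\<^sub>R \<psi> (x + y)"
    using assms(5) by (simp add: tendsto_scaleR)
  show "AE y in lborel. norm (K y *\<^sub>R \<phi> m (x + y)) \<le> \<bar>K y\<bar> * B" for m
    using assms(4) by (simp add: mult_left_mono)
qed

lemma correlation_add:
  fixes \<phi> \<psi> :: "'a::euclidean_space \<Rightarrow> 'b::{banach, second_countable_topology}"
  assumes "integrable lborel K" "K \<in> borel_measurable borel"
    and "\<phi> \<in> borel_measurable borel" "\<And>x. norm (\<phi> x) \<le> B"
    and "\<psi> \<in> borel_measurable borel" "\<And>x. norm (\<psi> x) \<le> C"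
  shows "correlation K (\<lambda>x. \<phi> x + \<psi> x) x = correlation K \<phi> x + correlation K \<psi> x"
  unfolding correlation_def scaleR_add_right
  by (intro Bochner_Integration.integral_add integrable_correlation_integrand[OF assms(2,3,1,4)]
      integrable_correlation_integrand[OF assms(2,5,1,6)])

lemma borel_measurable_lebesgueI: "f \<in> borel_measurable borel \<Longrightarrow> f \<in> borel_measurable lebesgue"
  by (rule measurable_completion) simp

lemma set_integrable_scaleR_bounded:
  fixes f :: "'a::euclidean_space \<Rightarrow> real" and \<phi> :: "'a \<Rightarrow> 'b::{banach, second_countable_topology}"
  assumes "set_integrable lebesgue A f" "\<phi> \<in> borel_measurable borel" "\<And>x. norm (\<phi> x) \<le> B"
  shows "set_integrable lebesgue A (\<lambda>x. f x *\<^sub>R \<phi> x)"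
  using integrable_scaleR_bounded[OF assms(1)[unfolded set_integrable_def]
      borel_measurable_lebesgueI[OF assms(2)] assms(3)]
  by (simp add: set_integrable_def)

lemma tendsto_set_integral_bounded:
  fixes f :: "'a \<Rightarrow> real" and \<phi> :: "nat \<Rightarrow> 'a \<Rightarrow> 'b::{banach, second_countable_topology}"
  assumes f: "set_integrable M A f"
    and \<phi>: "\<And>m. \<phi> m \<in> borel_measurable M" "\<And>m x. norm (\<phi> m x) \<le> B" "\<And>x. (\<lambda>m. \<phi> m x) \<longlonglongrightarrow> \<psi> x"
  shows "(\<lambda>m. LINT x:A|M. f x *\<^sub>R \<phi> m x) \<longlonglongrightarrow> (LINT x:A|M. f x *\<^sub>R \<psi> x)"
proof -
  have f_measurable: "(\<lambda>x. indicator A x * f x) \<in> borel_measurable M"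
    using f by (auto simp: set_integrable_def)
  have \<psi>_measurable: "\<psi> \<in> borel_measurable M"
    using borel_measurable_LIMSEQ_metric[OF \<phi>(1,3)] .
  show ?thesis
    unfolding set_lebesgue_integral_def
  proof (rule integral_dominated_convergence[where w = "\<lambda>x. \<bar>indicator A x *\<^sub>R f x\<bar> * B"])
    show "(\<lambda>x. indicator A x *\<^sub>R (f x *\<^sub>R \<psi> x)) \<in> borel_measurable M"
      unfolding scaleR_scaleR using f_measurable \<psi>_measurable by (rule borel_measurable_scaleR)
    show "(\<lambda>x. indicator A x *\<^sub>R (f x *\<^sub>R \<phi> m x)) \<in> borel_measurable M" for m
      unfolding scaleR_scaleR using f_measurable \<phi>(1) by (rule borel_measurable_scaleR)
    show "integrable M (\<lambda>x. \<bar>indicator A x *\<^sub>R f x\<bar> * B)"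
      using f by (simp add: set_integrable_def)
    show "AE x in M. (\<lambda>m. indicator A x *\<^sub>R (f x *\<^sub>R \<phi> m x)) \<longlonglongrightarrow> indicator A x *\<^sub>R (f x *\<^sub>R \<psi> x)"
      using \<phi>(3) by (simp add: tendsto_scaleR)
    show "AE x in M. norm (indicator A x *\<^sub>R (f x *\<^sub>R \<phi> m x)) \<le> \<bar>indicator A x *\<^sub>R f x\<bar> * B" for m
      using \<phi>(2) by (simp add: abs_mult mult_left_mono)
  qed
qed

lemma tendsto_indicator_infdist:
  assumes "closed F" "F \<noteq> {}"
  shows "(\<lambda>m. max 0 (1 - real m * infdist z F)) \<longlonglongrightarrow> indicator F z"
proof (cases "z \<in> F")
  case True
  then show ?thesis
    by simp
next
  case False
  then have "infdist z F > 0"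
    using assms infdist_pos_not_in_closed by blast
  then have "eventually (\<lambda>m. max 0 (1 - real m * infdist z F) = 0) sequentially"
    by (intro eventually_sequentiallyI[of "nat \<lceil>1 / infdist z F\<rceil>"]) (auto simp: field_simps)
  then show ?thesis
    using False by (simp add: tendsto_eventually)
qed

lemma set_integral_torus_cube_cis:
  "(LINT x:torus_cube|lebesgue. f x *\<^sub>R cis (k \<bullet> x)) = (2 * pi) ^ CARD('n) * fourier_coeff f (- k :: real^'n)"
  by (simp add: fourier_coeff_def scaleR_conv_of_real)

text \<open>The relation between the Fourier coefficients says \<open>f = K * g\<close> (convolution on the torus);
  \<open>pairing_identity \<phi>\<close> is its weak form tested against \<open>\<phi>\<close>.\<close>

locale torus_correlation =
  fixes f g K :: "real^'n \<Rightarrow> real"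
  assumes f_integrable: "set_integrable lebesgue torus_cube f"
    and g_integrable: "set_integrable lebesgue torus_cube g"
    and K_integrable: "integrable lborel K"
    and K_measurable [measurable]: "K \<in> borel_measurable borel"
    and fourier_coeff_eq:
      "\<And>k. int_vec k \<Longrightarrow> fourier_coeff f k = fourier_coeff g k * (\<integral>y. K y *\<^sub>R cis (- (k \<bullet> y)) \<partial>lborel)"
begin

definition pairing_identity :: "(real^'n \<Rightarrow> complex) \<Rightarrow> bool" where
  "pairing_identity \<phi> \<longleftrightarrow>
    (LINT x:torus_cube|lebesgue. f x *\<^sub>R \<phi> x) = (LINT x:torus_cube|lebesgue. g x *\<^sub>R correlation K \<phi> x)"

lemma pairing_identity_monomial: "int_vec k \<Longrightarrow> pairing_identity (\<lambda>x. c * cis (k \<bullet> x))"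
proof -
  assume "int_vec k"
  define \<Phi> where "\<Phi> = (\<integral>y. K y *\<^sub>R cis (k \<bullet> y) \<partial>lborel)"
  have "correlation K (\<lambda>x. c * cis (k \<bullet> x)) x = (c * cis (k \<bullet> x)) * \<Phi>" for x
  proof -
    have "correlation K (\<lambda>x. c * cis (k \<bullet> x)) x = (\<integral>y. (c * cis (k \<bullet> x)) * (K y *\<^sub>R cis (k \<bullet> y)) \<partial>lborel)"
      unfolding correlation_def
      by (intro Bochner_Integration.integral_cong) (auto simp: inner_add_right cis_mult[symmetric] mult_ac)
    also have "\<dots> = (c * cis (k \<bullet> x)) * \<Phi>"
      unfolding integral_mult_right_zero \<Phi>_def ..
    finally show ?thesis .
  qed
  then have "(LINT x:torus_cube|lebesgue. g x *\<^sub>R correlation K (\<lambda>x. c * cis (k \<bullet> x)) x)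
      = c * \<Phi> * (LINT x:torus_cube|lebesgue. g x *\<^sub>R cis (k \<bullet> x))"
    by (simp add: set_lebesgue_integral_def integral_mult_right_zero[symmetric] mult_ac)
  moreover have "(LINT x:torus_cube|lebesgue. f x *\<^sub>R (c * cis (k \<bullet> x)))
      = c * (LINT x:torus_cube|lebesgue. f x *\<^sub>R cis (k \<bullet> x))"
    by (simp add: set_lebesgue_integral_def integral_mult_right_zero[symmetric] mult_ac)
  moreover have "fourier_coeff f (- k) = fourier_coeff g (- k) * \<Phi>"
    using fourier_coeff_eq[OF int_vec_uminus[OF \<open>int_vec k\<close>]] by (simp add: \<Phi>_def)
  ultimately show ?thesis
    by (simp add: pairing_identity_def set_integral_torus_cube_cis)
qed

lemma set_integrable_f_scaleR:
  fixes \<phi> :: "real^'n \<Rightarrow> complex"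
  assumes "\<phi> \<in> borel_measurable borel" "\<And>x. norm (\<phi> x) \<le> B"
  shows "set_integrable lebesgue torus_cube (\<lambda>x. f x *\<^sub>R \<phi> x)"
  using f_integrable assms by (rule set_integrable_scaleR_bounded)

lemma set_integrable_g_scaleR_correlation:
  fixes \<phi> :: "real^'n \<Rightarrow> complex"
  assumes "\<phi> \<in> borel_measurable borel" "\<And>x. norm (\<phi> x) \<le> B"
  shows "set_integrable lebesgue torus_cube (\<lambda>x. g x *\<^sub>R correlation K \<phi> x)"
  using g_integrable borel_measurable_correlation[OF K_measurable assms(1)]
    norm_correlation_le[OF K_measurable assms(1) K_integrable assms(2)]
  by (rule set_integrable_scaleR_bounded)

lemma pairing_identity_add:
  fixes \<phi> \<psi> :: "real^'n \<Rightarrow> complex"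
  assumes "\<phi> \<in> borel_measurable borel" "\<And>x. norm (\<phi> x) \<le> B" "pairing_identity \<phi>"
    and "\<psi> \<in> borel_measurable borel" "\<And>x. norm (\<psi> x) \<le> C" "pairing_identity \<psi>"
  shows "pairing_identity (\<lambda>x. \<phi> x + \<psi> x)"
  using assms(3,6)
  by (simp add: pairing_identity_def scaleR_add_right
      correlation_add[OF K_integrable K_measurable assms(1,2,4,5)]
      set_integral_add set_integrable_f_scaleR[OF assms(1,2)] set_integrable_f_scaleR[OF assms(4,5)]
      set_integrable_g_scaleR_correlation[OF assms(1,2)] set_integrable_g_scaleR_correlation[OF assms(4,5)])

lemma pairing_identity_trig_poly: "q \<in> trig_poly \<Longrightarrow> pairing_identity q"
proof (induction rule: trig_poly.induct)
  case (monomial k c)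
  then show ?case
    by (rule pairing_identity_monomial)
next
  case (add p q)
  obtain B C where "\<And>x. norm (p x) \<le> B" "\<And>x. norm (q x) \<le> C"
    using trig_poly_bounded add.hyps by metis
  then show ?case
    using add by (intro pairing_identity_add trig_poly_borel_measurable)
qed

lemma pairing_identity_limit:
  fixes \<phi> :: "nat \<Rightarrow> real^'n \<Rightarrow> complex"
  assumes "\<And>m. \<phi> m \<in> borel_measurable borel" "\<And>m x. norm (\<phi> m x) \<le> B"
    and "\<And>x. (\<lambda>m. \<phi> m x) \<longlonglongrightarrow> \<psi> x" and "\<And>m. pairing_identity (\<phi> m)"
  shows "pairing_identity \<psi>"
proof -
  have "(\<lambda>m. LINT x:torus_cube|lebesgue. f x *\<^sub>R \<phi> m x) \<longlonglongrightarrow> (LINT x:torus_cube|lebesgue. f x *\<^sub>R \<psi> x)"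
    using assms by (intro tendsto_set_integral_bounded[OF f_integrable] borel_measurable_lebesgueI)
  moreover have "(\<lambda>m. LINT x:torus_cube|lebesgue. g x *\<^sub>R correlation K (\<phi> m) x)
      \<longlonglongrightarrow> (LINT x:torus_cube|lebesgue. g x *\<^sub>R correlation K \<psi> x)"
    using assms K_integrable
    by (intro tendsto_set_integral_bounded[OF g_integrable, where B = "B * (\<integral>y. \<bar>K y\<bar> \<partial>lborel)"]
        borel_measurable_lebesgueI borel_measurable_correlation norm_correlation_le tendsto_correlation) auto
  ultimately show ?thesis
    using assms(4) LIMSEQ_unique by (simp add: pairing_identity_def)
qed

lemma pairing_identity_continuous:
  fixes h :: "complex^'n \<Rightarrow> real"
  assumes h: "continuous_on (range torus_emb) h"
  shows "pairing_identity (\<lambda>x. complex_of_real (h (torus_emb x)))"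
proof -
  obtain B where B: "\<And>x. \<bar>h (torus_emb x)\<bar> \<le> B"
    using compact_imp_bounded[OF compact_continuous_image[OF h compact_range_torus_emb]]
    by (force simp: bounded_iff)
  have "\<exists>q. q \<in> trig_poly \<and> (\<forall>x. norm (complex_of_real (h (torus_emb x)) - q x) < inverse (real (Suc m)))" for m
    by (rule trig_poly_dense[OF h]) auto
  then obtain q where q: "\<And>m. q m \<in> trig_poly"
    and close: "\<And>m x. norm (complex_of_real (h (torus_emb x)) - q m x) < inverse (real (Suc m))"
    by metis
  show ?thesis
  proof (rule pairing_identity_limit)
    show "q m \<in> borel_measurable borel" "pairing_identity (q m)" for m
      using q by (simp_all add: trig_poly_borel_measurable pairing_identity_trig_poly)
    show "norm (q m x) \<le> B + 1" for m x
    proof -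
      have "inverse (real (Suc m)) \<le> 1"
        by (simp add: inverse_le_1_iff)
      then show ?thesis
        using norm_triangle_sub[of "q m x" "complex_of_real (h (torus_emb x))"] B[of x] close[of x m]
        by (simp add: norm_minus_commute)
    qed
    show "(\<lambda>m. q m x) \<longlonglongrightarrow> complex_of_real (h (torus_emb x))" for x
    proof (rule LIM_zero_cancel, rule Lim_null_comparison)
      show "\<forall>\<^sub>F m in sequentially. norm (q m x - complex_of_real (h (torus_emb x))) \<le> inverse (real (Suc m))"
        using close by (simp add: norm_minus_commute less_imp_le)
    qed (rule LIMSEQ_inverse_real_of_nat)
  qed
qed

lemma set_integral_indicator_torus_closed:
  assumes "closed F" "F \<noteq> {}"
  shows "(LINT x:torus_cube|lebesgue. f x * indicator (torus_emb -` F) x)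
    = (LINT x:torus_cube|lebesgue. g x * correlation K (indicator (torus_emb -` F)) x)"
proof -
  let ?P = "torus_emb -` F :: (real^'n) set"
  define h where "h m z = max 0 (1 - real m * infdist z F)" for m z
  have "pairing_identity (\<lambda>x. complex_of_real (indicator ?P x))"
  proof (rule pairing_identity_limit)
    show "pairing_identity (\<lambda>x. complex_of_real (h m (torus_emb x)))" for m
      unfolding h_def by (intro pairing_identity_continuous continuous_intros)
    show "(\<lambda>x. complex_of_real (h m (torus_emb x))) \<in> borel_measurable borel" for m
      unfolding h_def by (intro borel_measurable_continuous_onI continuous_intros continuous_on_torus_emb)
    show "norm (complex_of_real (h m (torus_emb x))) \<le> 1" for m x
      by (simp add: h_def infdist_nonneg)
    show "(\<lambda>m. complex_of_real (h m (torus_emb x))) \<longlonglongrightarrow> complex_of_real (indicator ?P x)" for x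
      unfolding h_def using tendsto_indicator_infdist[OF assms]
      by (intro tendsto_of_real) (simp add: indicator_def)
  qed
  moreover have "correlation K (\<lambda>x. complex_of_real (indicator ?P x)) x
      = complex_of_real (correlation K (indicator ?P) x)" for x
    by (simp add: correlation_def scaleR_conv_of_real[symmetric] integral_complex_of_real[symmetric]
        del: integral_complex_of_real)
  ultimately have "complex_of_real (LINT x:torus_cube|lebesgue. f x * indicator ?P x)
      = complex_of_real (LINT x:torus_cube|lebesgue. g x * correlation K (indicator ?P) x)"
    by (simp add: pairing_identity_def scaleR_conv_of_real set_integral_complex_of_real[symmetric])
  then show ?thesis
    by simp
qed

end

section \<open>Positivity\<close>

lemma negligible_periodic:
  assumes periodic: "\<And>x k. int_vec k \<Longrightarrow> x \<in> P \<Longrightarrow> x + (2 * pi) *\<^sub>R k \<in> P"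
    and "negligible (P \<inter> torus_cube)"
  shows "negligible P"
proof -
  have "P \<subseteq> (\<Union>k\<in>{k. int_vec k}. (+) ((2 * pi) *\<^sub>R k) ` (P \<inter> torus_cube))"
  proof
    fix x assume "x \<in> P"
    then have "x - (2 * pi) *\<^sub>R lattice_floor x \<in> P \<inter> torus_cube"
      using periodic[OF int_vec_uminus[OF int_vec_lattice_floor]] diff_lattice_floor_in_torus_cube by simp
    then show "x \<in> (\<Union>k\<in>{k. int_vec k}. (+) ((2 * pi) *\<^sub>R k) ` (P \<inter> torus_cube))"
      using int_vec_lattice_floor
      by (intro UN_I[of "lattice_floor x"] image_eqI[of x _ "x - (2 * pi) *\<^sub>R lattice_floor x"]) auto
  qed
  moreover have "negligible (\<Union>k\<in>{k. int_vec k}. (+) ((2 * pi) *\<^sub>R k) ` (P \<inter> torus_cube))"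
    using countable_int_vec assms(2)
    by (intro negligible_countable_Union countable_image) (auto intro: negligible_translation)
  ultimately show ?thesis
    using negligible_subset by blast
qed

lemma torus_ball_periodic:
  assumes "int_vec k" "x \<in> torus_ball c r"
  shows "x + (2 * pi) *\<^sub>R k \<in> torus_ball c r"
proof -
  obtain l where "int_vec l" "dist x (c + (2 * pi) *\<^sub>R l) < r"
    using assms(2) by (auto simp: torus_ball_def)
  moreover have "dist (x + (2 * pi) *\<^sub>R k) (c + (2 * pi) *\<^sub>R (l + k)) = dist x (c + (2 * pi) *\<^sub>R l)"
    by (simp add: dist_norm algebra_simps)
  ultimately show ?thesis
    unfolding torus_ball_def using int_vec_add[OF _ assms(1)] by (intro CollectI exI[of _ "l + k"]) auto
qed

lemma torus_ball_eq_UNIV: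
  assumes "r > 2 * pi * CARD('n)"
  shows "torus_ball c r = (UNIV :: (real^'n) set)"
proof -
  have "x \<in> torus_ball c r" for x :: "real^'n"
  proof -
    define y where "y = x - c - (2 * pi) *\<^sub>R lattice_floor (x - c)"
    have "0 \<le> y $ i \<and> y $ i \<le> 2 * pi" for i
      using diff_lattice_floor_in_torus_cube[of "x - c"] by (simp add: y_def torus_cube_def mem_box_cart)
    then have bound: "\<bar>y $ i\<bar> \<le> 2 * pi" for i
      by (simp add: abs_le_iff)
    have "norm y \<le> (\<Sum>i\<in>UNIV. \<bar>y $ i\<bar>)"
      by (rule norm_le_l1_cart)
    also have "\<dots> \<le> (\<Sum>i\<in>(UNIV :: 'n set). 2 * pi)"
      by (rule sum_mono) (rule bound)
    finally have "norm y \<le> 2 * pi * CARD('n)"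
      by (simp add: mult.commute)
    then have "dist x (c + (2 * pi) *\<^sub>R lattice_floor (x - c)) < r"
      using assms by (simp add: dist_norm y_def algebra_simps)
    then show ?thesis
      using int_vec_lattice_floor by (auto simp: torus_ball_def)
  qed
  then show ?thesis
    by blast
qed

lemma vanish_radius_less:
  fixes u :: "real^'n \<Rightarrow> real"
  assumes "\<not> (AE x in lebesgue. u x = 0)" and "t > vanish_radius u"
  shows "t > 0" and "\<not> (AE x in lebesgue. x \<in> torus_ball c t \<longrightarrow> u x = 0)"
proof -
  define S where "S = {r. r \<ge> 0 \<and> (\<exists>c. AE x in lebesgue. x \<in> torus_ball c r \<longrightarrow> u x = 0)}"
  have "0 \<in> S"
    by (simp add: S_def torus_ball_def)
  have "bdd_above S"
  proof (rule bdd_aboveI)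
    fix r assume "r \<in> S"
    then obtain c where "AE x in lebesgue. x \<in> torus_ball c r \<longrightarrow> u x = 0"
      by (auto simp: S_def)
    show "r \<le> 2 * pi * CARD('n)"
    proof (rule ccontr)
      assume "\<not> r \<le> 2 * pi * CARD('n)"
      then have "torus_ball c r = UNIV"
        by (intro torus_ball_eq_UNIV) simp
      then show False
        using assms(1) \<open>AE x in lebesgue. x \<in> torus_ball c r \<longrightarrow> u x = 0\<close> by simp
    qed
  qed
  have radius: "vanish_radius u = Sup S"
    by (simp add: vanish_radius_def S_def)
  show "t > 0"
    using cSup_upper[OF \<open>0 \<in> S\<close> \<open>bdd_above S\<close>] assms(2) radius by simp
  have "t \<notin> S"
    using cSup_upper[OF _ \<open>bdd_above S\<close>, of t] assms(2) radius by auto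
  then show "\<not> (AE x in lebesgue. x \<in> torus_ball c t \<longrightarrow> u x = 0)"
    using \<open>t > 0\<close> by (auto simp: S_def)
qed

lemma nonnegligible_Int_cball:
  fixes Z :: "'a::euclidean_space set"
  assumes "\<not> negligible Z"
  shows "\<exists>r. \<not> negligible (Z \<inter> cball 0 r)"
proof (rule ccontr)
  assume "\<not> ?thesis"
  then have "negligible (\<Union>m::nat. Z \<inter> cball 0 (real m))"
    by (intro negligible_countable_Union) auto
  moreover have "x \<in> (\<Union>m::nat. Z \<inter> cball 0 (real m))" if "x \<in> Z" for x
    using that real_nat_ceiling_ge[of "norm x"] by (auto intro: exI[of _ "nat \<lceil>norm x\<rceil>"])
  ultimately show False
    using assms negligible_subset[of _ Z] by blast
qed

lemma lebesgue_inner_compact_nonnegligible: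
  fixes Z :: "'a::euclidean_space set"
  assumes "Z \<in> sets lebesgue" "\<not> negligible Z"
  obtains C where "compact C" "C \<subseteq> Z" "\<not> negligible C"
proof -
  obtain r where r: "\<not> negligible (Z \<inter> cball 0 r)"
    using nonnegligible_Int_cball[OF assms(2)] by blast
  define S where "S = Z \<inter> cball 0 r"
  have "S \<in> lmeasurable"
    unfolding S_def using assms(1)
    by (intro bounded_set_imp_lmeasurable) (auto intro: bounded_subset[OF bounded_cball])
  moreover have "\<not> negligible S"
    using r by (simp add: S_def)
  ultimately have "measure lebesgue S \<noteq> 0"
    using negligible_iff_measure by blast
  then have "measure lebesgue S > 0"
    using measure_nonneg[of lebesgue S] by linarith
  then obtain T where T: "closed T" "T \<subseteq> S" "S - T \<in> lmeasurable"
      "emeasure lebesgue (S - T) < ennreal (measure lebesgue S / 2)"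
    using sets_lebesgue_inner_closed[of S "measure lebesgue S / 2"] \<open>S \<in> lmeasurable\<close>
    by (auto simp: fmeasurable_def)
  have "\<not> negligible T"
  proof
    assume "negligible T"
    then have "measure lebesgue (S - T) = measure lebesgue S"
      using \<open>S \<in> lmeasurable\<close> by (intro measure_Diff_null_set) (auto simp: negligible_iff_null_sets)
    moreover have "measure lebesgue (S - T) < measure lebesgue S / 2"
      using T(3,4) \<open>measure lebesgue S > 0\<close> by (simp add: emeasure_eq_measure2 ennreal_less_iff)
    ultimately show False
      using \<open>measure lebesgue S > 0\<close> by simp
  qed
  moreover have "compact T"
  proof -
    have "bounded T"
      using T(2) bounded_subset[OF bounded_cball] by (auto simp: S_def)
    then show ?thesis
      using T(1) by (simp add: compact_eq_bounded_closed)
  qed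
  ultimately show ?thesis
    using that T(2) by (auto simp: S_def)
qed

lemma compact_nonnegligible_support_point:
  fixes C :: "'a::euclidean_space set"
  assumes "compact C" "\<not> negligible C"
  obtains c where "c \<in> C" "\<And>\<epsilon>. \<epsilon> > 0 \<Longrightarrow> \<not> negligible (C \<inter> ball c \<epsilon>)"
proof (rule ccontr)
  assume "\<not> thesis"
  then have "\<forall>c\<in>C. \<exists>\<epsilon>>0. negligible (C \<inter> ball c \<epsilon>)"
    using that by blast
  then obtain \<epsilon> where \<epsilon>: "\<And>c. c \<in> C \<Longrightarrow> \<epsilon> c > 0 \<and> negligible (C \<inter> ball c (\<epsilon> c))"
    by metis
  then have "C \<subseteq> (\<Union>c\<in>C. ball c (\<epsilon> c))"
    by force
  then obtain D where D: "D \<subseteq> C" "finite D" "C \<subseteq> (\<Union>c\<in>D. ball c (\<epsilon> c))"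
    using compactE_image[OF assms(1), of C "\<lambda>c. ball c (\<epsilon> c)"] by auto
  then have "C = (\<Union>c\<in>D. C \<inter> ball c (\<epsilon> c))"
    by blast
  moreover have "negligible (\<Union>c\<in>D. C \<inter> ball c (\<epsilon> c))"
    using D(1,2) \<epsilon> by (intro negligible_Union) auto
  ultimately show False
    using assms(2) by simp
qed

lemma correlation_indicator_pos:
  fixes K :: "'a::euclidean_space \<Rightarrow> real"
  assumes K: "integrable lborel K" "K \<in> borel_measurable borel" "\<And>y. 0 \<le> K y" "\<And>y. norm y < t \<Longrightarrow> 0 < K y"
    and P: "P \<in> sets borel" "\<not> negligible (P \<inter> ball x t)"
  shows "correlation K (indicator P) x > (0::real)"
proof -
  define F where "F y = K y * indicator P (x + y)" for y
  have "integrable lborel (\<lambda>y. K y *\<^sub>R (indicator P (x + y) :: real))"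
    by (rule integrable_correlation_integrand[where B = 1, OF K(2) _ K(1)])
      (use P(1) in \<open>auto simp: indicator_def\<close>)
  then have F_integrable: "integrable lborel F"
    by (simp add: F_def[abs_def])
  have F_nonneg: "0 \<le> F y" for y
    by (simp add: F_def K(3))
  have F_pos: "0 < F y" if "y \<in> (+) (- x) ` (P \<inter> ball x t)" for y
    using that K(4)[of y] by (auto simp: F_def dist_norm norm_minus_commute)
  have "(\<integral>y. F y \<partial>lborel) \<noteq> 0"
  proof
    assume "(\<integral>y. F y \<partial>lborel) = 0"
    then have "AE y in lborel. F y = 0"
      using integral_nonneg_eq_0_iff_AE[OF F_integrable] F_nonneg by simp
    then have "AE y in lebesgue. F y = 0"
      by (rule AE_completion)
    then obtain N where "negligible N" "{y. F y \<noteq> 0} \<subseteq> N"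
      unfolding eventually_ae_filter_negligible by auto
    moreover have "(+) (- x) ` (P \<inter> ball x t) \<subseteq> {y. F y \<noteq> 0}"
      using F_pos by fastforce
    ultimately have "negligible ((+) (- x) ` (P \<inter> ball x t))"
      using negligible_subset by blast
    then show False
      using P(2) negligible_translation_rev by blast
  qed
  moreover have "0 \<le> (\<integral>y. F y \<partial>lborel)"
    using F_nonneg by simp
  ultimately show ?thesis
    by (simp add: correlation_def F_def)
qed

lemma correlation_indicator_periodic_pos:
  fixes K :: "real^'n \<Rightarrow> real"
  assumes K: "integrable lborel K" "K \<in> borel_measurable borel" "\<And>y. 0 \<le> K y" "\<And>y. norm y < t \<Longrightarrow> 0 < K y"
    and P: "P \<in> sets borel" "\<And>x k. int_vec k \<Longrightarrow> x \<in> P \<longleftrightarrow> x + (2 * pi) *\<^sub>R k \<in> P"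
    and support: "\<And>\<epsilon>. \<epsilon> > 0 \<Longrightarrow> \<not> negligible (P \<inter> ball c \<epsilon>)"
    and x: "x \<in> torus_ball c t"
  shows "correlation K (indicator P) x > (0::real)"
proof -
  obtain k where k: "int_vec k" "dist x (c + (2 * pi) *\<^sub>R k) < t"
    using x by (auto simp: torus_ball_def)
  define x' where "x' = x - (2 * pi) *\<^sub>R k"
  have shift: "indicator P (x + y) = (indicator P (x' + y) :: real)" for y
    using P(2)[OF k(1), of "x' + y"] by (simp add: x'_def indicator_def algebra_simps)
  have subset: "P \<inter> ball c (t - dist x' c) \<subseteq> P \<inter> ball x' t"
  proof
    fix z assume "z \<in> P \<inter> ball c (t - dist x' c)"
    moreover have "dist x' z \<le> dist x' c + dist c z"
      by (rule dist_triangle)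
    ultimately show "z \<in> P \<inter> ball x' t"
      by simp
  qed
  have "t - dist x' c > 0"
    using k(2) by (simp add: x'_def dist_norm algebra_simps)
  then have "\<not> negligible (P \<inter> ball x' t)"
    using support subset negligible_subset by blast
  then have "correlation K (indicator P) x' > (0::real)"
    using K P(1) by (intro correlation_indicator_pos)
  also have "correlation K (indicator P) x' = correlation K (indicator P :: real^'n \<Rightarrow> real) x"
    unfolding correlation_def by (intro Bochner_Integration.integral_cong refl) (simp only: shift)
  finally show ?thesis .
qed

lemma nonnegligible_positive_part:
  fixes u :: "real^'n \<Rightarrow> real"
  assumes "periodic_2pi u" "AE x in lebesgue. 0 \<le> u x"
    and "\<not> (AE x in lebesgue. x \<in> torus_ball c t \<longrightarrow> u x = 0)"
  shows "\<not> negligible ({x \<in> torus_ball c t. 0 < u x} \<inter> torus_cube)"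
proof
  define Q where "Q = {x \<in> torus_ball c t. 0 < u x}"
  assume "negligible (Q \<inter> torus_cube)"
  then have "negligible Q"
  proof (rule negligible_periodic[rotated])
    show "x + (2 * pi) *\<^sub>R k \<in> Q" if "int_vec k" "x \<in> Q" for x k
    proof -
      have "x + (2 * pi) *\<^sub>R k \<in> torus_ball c t"
        using torus_ball_periodic[OF that(1)] that(2) by (simp add: Q_def)
      moreover have "u (x + (2 * pi) *\<^sub>R k) = u x"
        using assms(1) that(1) by (simp add: periodic_2pi_def)
      ultimately show ?thesis
        using that(2) by (simp add: Q_def)
    qed
  qed
  obtain N where N: "negligible N" "{x. \<not> 0 \<le> u x} \<subseteq> N"
    using assms(2) unfolding eventually_ae_filter_negligible by auto
  have "{x. \<not> (x \<in> torus_ball c t \<longrightarrow> u x = 0)} \<subseteq> Q \<union> N"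
  proof
    fix x assume x: "x \<in> {x. \<not> (x \<in> torus_ball c t \<longrightarrow> u x = 0)}"
    show "x \<in> Q \<union> N"
    proof (cases "x \<in> N")
      case False
      then have "0 \<le> u x"
        using N(2) by blast
      then show ?thesis
        using x by (auto simp: Q_def)
    qed simp
  qed
  then have "AE x in lebesgue. x \<in> torus_ball c t \<longrightarrow> u x = 0"
    unfolding eventually_ae_filter_negligible using \<open>negligible Q\<close> N(1)
    by (intro exI[of _ "Q \<union> N"]) auto
  then show False
    using assms(3) by simp
qed

lemma set_integral_torus_cube_pos:
  fixes u I :: "real^'n \<Rightarrow> real"
  assumes u: "set_integrable lebesgue torus_cube u" "periodic_2pi u" "AE x in lebesgue. 0 \<le> u x"
      "\<not> (AE x in lebesgue. x \<in> torus_ball c t \<longrightarrow> u x = 0)"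
    and I: "I \<in> borel_measurable borel" "\<And>x. \<bar>I x\<bar> \<le> B" "\<And>x. 0 \<le> I x"
      "\<And>x. x \<in> torus_ball c t \<Longrightarrow> 0 < I x"
  shows "(LINT x:torus_cube|lebesgue. u x * I x) > 0"
proof -
  define F where "F x = indicator torus_cube x * u x * I x" for x
  have F_integrable: "integrable lebesgue F"
    using set_integrable_scaleR_bounded[OF u(1) I(1), of B] I(2)
    by (simp add: F_def[abs_def] set_integrable_def mult.assoc)
  have F_nonneg: "AE x in lebesgue. 0 \<le> F x"
    using u(3) by eventually_elim (simp add: F_def I(3))
  have "(\<integral>x. F x \<partial>lebesgue) \<noteq> 0"
  proof
    assume "(\<integral>x. F x \<partial>lebesgue) = 0"
    then have "AE x in lebesgue. F x = 0"
      using integral_nonneg_eq_0_iff_AE[OF F_integrable F_nonneg] by simp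
    then obtain N where N: "negligible N" "{x. F x \<noteq> 0} \<subseteq> N"
      unfolding eventually_ae_filter_negligible by auto
    have "{x \<in> torus_ball c t. 0 < u x} \<inter> torus_cube \<subseteq> N"
    proof
      fix x assume "x \<in> {x \<in> torus_ball c t. 0 < u x} \<inter> torus_cube"
      then have "F x \<noteq> 0"
        using I(4)[of x] by (auto simp: F_def)
      then show "x \<in> N"
        using N(2) by blast
    qed
    then show False
      using nonnegligible_positive_part[OF u(2-4)] N(1) negligible_subset by blast
  qed
  moreover have "0 \<le> (\<integral>x. F x \<partial>lebesgue)"
    using F_nonneg by (rule integral_nonneg_AE)
  ultimately show ?thesis
    by (simp add: F_def set_lebesgue_integral_def mult.assoc)
qed


lemma exists_closed_torus_set_nonpos:
  fixes u :: "real^'n \<Rightarrow> real"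
  assumes "periodic_2pi u" "u \<in> borel_measurable lebesgue" "\<not> (AE x in lebesgue. 0 < u x)"
  obtains F c where "closed F" "F \<noteq> {}" "\<And>x. torus_emb x \<in> F \<Longrightarrow> u x \<le> 0"
    "\<And>\<epsilon>. \<epsilon> > 0 \<Longrightarrow> \<not> negligible (torus_emb -` F \<inter> ball c \<epsilon>)"
proof -
  define Z where "Z = {x. u x \<le> 0}"
  have "{x \<in> space lebesgue. u x \<le> 0} \<in> sets lebesgue"
    using assms(2) by measurable
  then have "Z \<in> sets lebesgue"
    by (simp add: Z_def)
  moreover have "\<not> negligible Z"
  proof
    assume "negligible Z"
    then have "AE x in lebesgue. 0 < u x"
      unfolding eventually_ae_filter_negligible by (intro exI[of _ Z]) (auto simp: Z_def)
    then show False
      using assms(3) by simp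
  qed
  ultimately obtain C where C: "compact C" "C \<subseteq> Z" "\<not> negligible C"
    by (rule lebesgue_inner_compact_nonnegligible)
  obtain c where c: "c \<in> C" "\<And>\<epsilon>. \<epsilon> > 0 \<Longrightarrow> \<not> negligible (C \<inter> ball c \<epsilon>)"
    using compact_nonnegligible_support_point[OF C(1,3)] by blast
  show ?thesis
  proof
    show "closed (torus_emb ` C)"
      using C(1) by (intro compact_imp_closed compact_continuous_image continuous_on_torus_emb)
    show "torus_emb ` C \<noteq> {}"
      using c(1) by blast
    show "u x \<le> 0" if "torus_emb x \<in> torus_emb ` C" for x
    proof -
      obtain y where "y \<in> C" "torus_emb x = torus_emb y"
        using \<open>torus_emb x \<in> torus_emb ` C\<close> by auto
      moreover obtain k where "int_vec k" "x = y + (2 * pi) *\<^sub>R k"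
        using torus_emb_eqD[OF \<open>torus_emb x = torus_emb y\<close>] by blast
      ultimately show ?thesis
        using C(2) assms(1) by (auto simp: Z_def periodic_2pi_def)
    qed
    show "\<not> negligible (torus_emb -` torus_emb ` C \<inter> ball c \<epsilon>)" if "\<epsilon> > 0" for \<epsilon>
      using c(2)[OF that] negligible_subset[of _ "C \<inter> ball c \<epsilon>"] by blast
  qed
qed

lemma set_integral_correlation_indicator_pos:
  fixes u K :: "real^'n \<Rightarrow> real"
  assumes u: "set_integrable lebesgue torus_cube u" "periodic_2pi u" "AE x in lebesgue. 0 \<le> u x"
      "\<not> (AE x in lebesgue. x \<in> torus_ball c t \<longrightarrow> u x = 0)"
    and K: "integrable lborel K" "K \<in> borel_measurable borel" "\<And>y. 0 \<le> K y" "\<And>y. norm y < t \<Longrightarrow> 0 < K y"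
    and P: "P \<in> sets borel" "\<And>x k. int_vec k \<Longrightarrow> x \<in> P \<longleftrightarrow> x + (2 * pi) *\<^sub>R k \<in> P"
    and support: "\<And>\<epsilon>. \<epsilon> > 0 \<Longrightarrow> \<not> negligible (P \<inter> ball c \<epsilon>)"
  shows "(LINT x:torus_cube|lebesgue. u x * correlation K (indicator P) x) > 0"
proof (rule set_integral_torus_cube_pos[OF u])
  show "correlation K (indicator P :: real^'n \<Rightarrow> real) \<in> borel_measurable borel"
    using K(2) P(1) by (intro borel_measurable_correlation) auto
  have "norm (indicator P z :: real) \<le> 1" for z
    by (simp add: indicator_def)
  from norm_correlation_le[OF K(2) borel_measurable_indicator[OF P(1)] K(1) this]
  show "\<bar>correlation K (indicator P :: real^'n \<Rightarrow> real) x\<bar> \<le> 1 * (\<integral>y. \<bar>K y\<bar> \<partial>lborel)" for x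
    by simp
  show "0 \<le> correlation K (indicator P :: real^'n \<Rightarrow> real) x" for x
    unfolding correlation_def using K(3) by (intro Bochner_Integration.integral_nonneg) simp
  show "0 < correlation K (indicator P :: real^'n \<Rightarrow> real) x" if "x \<in> torus_ball c t" for x
    using K P support that by (intro correlation_indicator_periodic_pos)
qed

lemma closed_vimage_torus_emb: "closed F \<Longrightarrow> closed (torus_emb -` F :: (real^'n) set)"
  using continuous_on_torus_emb[of UNIV]
  by (intro continuous_closed_vimage) (auto simp: continuous_on_eq_continuous_at)

lemma set_integral_mult_indicator_nonpos:
  fixes u :: "'a \<Rightarrow> real"
  assumes "\<And>x. x \<in> P \<Longrightarrow> u x \<le> 0"
  shows "(LINT x:A|M. u x * indicator P x) \<le> 0"
proof -
  have "0 \<le> (\<integral>x. - (indicator A x * (u x * indicator P x)) \<partial>M)"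
    using assms by (intro Bochner_Integration.integral_nonneg) (simp add: indicator_def mult_nonpos_nonneg)
  then show ?thesis
    by (simp add: set_lebesgue_integral_def)
qed

lemma L2_torus_set_integrable:
  assumes "L2_torus f"
  shows "set_integrable lebesgue torus_cube f"
proof -
  have cube: "torus_cube \<in> sets lebesgue"
    by (simp add: torus_cube_def)
  interpret finite_measure "lebesgue_on torus_cube"
    by (rule finite_measure_lebesgue_on) (simp add: torus_cube_def)
  have "f \<in> borel_measurable (lebesgue_on torus_cube)"
    using assms by (simp add: L2_torus_def measurable_restrict_space1)
  moreover have "integrable (lebesgue_on torus_cube) (\<lambda>x. (f x)\<^sup>2)"
    using assms by (simp add: L2_torus_def set_integrable_def integrable_restrict_space cube)
  ultimately have "integrable (lebesgue_on torus_cube) f"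
    by (rule square_integrable_imp_integrable)
  then show ?thesis
    by (simp add: set_integrable_def integrable_restrict_space cube)
qed

lemma torus_correlation_wave_kernel:
  fixes w1 u :: "real^'n \<Rightarrow> real"
  assumes "CARD('n) \<in> {1, 2}" "t > 0" "L2_torus w1" "wave_position (\<lambda>_. 0) w1 t u"
  shows "torus_correlation u w1 (wave_kernel t)"
proof
  show "set_integrable lebesgue torus_cube u" "set_integrable lebesgue torus_cube w1"
    using assms(3,4) by (simp_all add: wave_position_def L2_torus_set_integrable)
  show "integrable lborel (wave_kernel t :: real^'n \<Rightarrow> real)"
    using assms(1,2) by (rule integrable_wave_kernel)
  show "wave_kernel t \<in> borel_measurable borel"
    by (rule borel_measurable_wave_kernel)
  fix k :: "real^'n"
  assume "int_vec k"
  have "(\<integral>y. wave_kernel t y *\<^sub>R cis (- (k \<bullet> y)) \<partial>lborel) = complex_of_real (sin_quot (- k) t)"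
    using fourier_wave_kernel[OF assms(1,2), of "- k"] by simp
  also have "sin_quot (- k) t = sin_quot k t"
    by (simp add: sin_quot_def)
  finally show "fourier_coeff u k = fourier_coeff w1 k * (\<integral>y. wave_kernel t y *\<^sub>R cis (- (k \<bullet> y)) \<partial>lborel)"
    using assms(4) \<open>int_vec k\<close> by (simp add: wave_position_def fourier_coeff_def)
qed

theorem mainTheorem17:
  fixes w1 :: "real^'n \<Rightarrow> real" and w :: "real \<Rightarrow> real^'n \<Rightarrow> real"
  assumes dim: "CARD('n) \<in> {1, 2}"
    and L2: "L2_torus w1"
    and nonzero: "\<not> (AE x in lebesgue. w1 x = 0)"
    and nonneg: "AE x in lebesgue. w1 x \<ge> 0"
    and sol: "\<And>s. wave_position (\<lambda>_. 0) w1 s (w s)"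
    and t: "t > vanish_radius w1"
  shows "AE x in lebesgue. w t x > 0"
proof (rule ccontr)
  assume contra: "\<not> (AE x in lebesgue. w t x > 0)"
  have "periodic_2pi (w t)" "w t \<in> borel_measurable lebesgue"
    using sol[of t] by (simp_all add: wave_position_def L2_torus_def)
  then obtain F c where F: "closed F" "F \<noteq> {}" "\<And>x. torus_emb x \<in> F \<Longrightarrow> w t x \<le> 0"
    and support: "\<And>\<epsilon>. \<epsilon> > 0 \<Longrightarrow> \<not> negligible (torus_emb -` F \<inter> ball c \<epsilon>)"
    using contra by (rule exists_closed_torus_set_nonpos) blast
  let ?P = "torus_emb -` F"
  have "t > 0"
    using vanish_radius_less(1)[OF nonzero t] .
  interpret torus_correlation "w t" w1 "wave_kernel t"
    using torus_correlation_wave_kernel[OF dim \<open>t > 0\<close> L2 sol] .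
  have "(LINT x:torus_cube|lebesgue. w t x * indicator ?P x) \<le> 0"
    using F(3) by (intro set_integral_mult_indicator_nonpos) simp
  moreover have "(LINT x:torus_cube|lebesgue. w1 x * correlation (wave_kernel t) (indicator ?P) x) > 0"
    using g_integrable L2 nonneg vanish_radius_less(2)[OF nonzero t] K_integrable K_measurable
      wave_kernel_nonneg wave_kernel_pos closed_vimage_torus_emb[OF F(1)] support
    by (intro set_integral_correlation_indicator_pos[where c = c and t = t])
      (auto simp: L2_torus_def torus_emb_periodic)
  ultimately show False
    using set_integral_indicator_torus_closed[OF F(1,2)] by simp
qed

end
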